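(* Consider the binary instrumental variable model described in the context, with both treatment and outcome possibly missing: $R^D\in\{0,1\}$ indicates that $D$ is observed and $R^Y\in\{0,1\}$ that $Y$ is observed, so the observed data are $(Z,R^D,R^D D,R^Y,R^Y Y)$. Assume the IV assumptions, that $R^D\perp\!\!\!\perp (U,D,Y)\mid Z$, and that $\mathbb{P}(R^D=1\mid Z=z)>0$ for $z=0,1$. Then: (1ZD$\oplus$2Z) If $R^Y\perp\!\!\!\perp (U,Y)\mid (Z,D,R^D)$ and $\mathbb{P}(R^Y=1\mid Z=z,D=d,R^D=1)>0$ for all $z$ and $d$, then the CACE is identifiable. (1UD$\oplus$2Z) If $R^Y\perp\!\!\!\perp (Z,Y)\mid (U,D,R^D)$ and $\mathbb{P}(R^Y=1\mid U=c,D=d,R^D=1)>0$ for $d=0,1$, then the CACE is identifiable. (1UY$\oplus$2Z) If $R^Y\perp\!\!\!\perp (Z,D)\mid (U,Y,R^D)$, $Y$ is binary, and $\mathbb{P}(R^Y=1\mid U=c,Y=y,R^D=1)>0$ for $y=0,1$, then the CACE is identifiable. (1DY$\oplus$2Z) If $R^Y\perp\!\!\!\perp (Z,U)\mid (D,Y,R^D)$, $Y$ is binary, noncompliance is two-sided, $\mathbb{P}(R^Y=1\mid D=d,Y=y,R^D=1)>0$ for all $d$ and $y$, and $Y\not\!\perp\!\!\!\perp Z\mid (D=d,R^D=1)$ for $d=0,1$, then the CACE is identifiable. (1ZY$\oplus$2Z) If $R^Y\perp\!\!\!\perp (U,D)\mid (Z,Y,R^D)$, $Y$ is binary, noncompliance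 is two-sided, $\mathbb{P}(R^Y=1\mid Z=z,Y=y,R^D=1)>0$ for all $z$ and $y$, and $Y\not\!\perp\!\!\!\perp D\mid Z=z$ for $z=0,1$, then the CACE is identifiable.
   Context: $Z\in\{0,1\}$ is a binary instrument, $D\in\{0,1\}$ the treatment received, $Y$ the outcome (real-valued; "binary $Y$" means $Y\in\{0,1\}$). Potential values $D(z),Y(z)$ for $z=0,1$ are defined with respect to the instrument; observed values are $D=ZD(1)+(1-Z)D(0)$ and $Y=ZY(1)+(1-Z)Y(0)$. The latent compliance status $U$ is $a$ (always-taker) if $D(1)=D(0)=1$, $c$ (complier) if $D(1)=1,D(0)=0$, $d$ (defier) if $D(1)=0,D(0)=1$, $n$ (never-taker) if $D(1)=D(0)=0$. IV assumptions: (1) $Z\perp\!\!\!\perp\{D(1),D(0),Y(1),Y(0)\}$; (2) $D(1)\ge D(0)$ for all units (no defiers); (3) $\mathbb{E}\{D(1)-D(0)\}\neq0$; (4) $Y(1)=Y(0)$ for units with $U\in\{a,n\}$. The complier average causal effect is $\mathrm{CACE}=\mathbb{E}\{Y(1)-Y(0)\mid U=c\}$. One-sided noncompliance means $D(0)=0$ for all units (only compliers and never-takers); two-sided noncompliance is the general case in which units in both arms may fail to comply (always-takers and never-takers may both be present). Independence statements refer to the joint distribution of $(Z,U,D,Y,R^D,R^Y)$. The CACE is identifiable if it is uniquely determined by the distribution of the observed data among all joint distributions satisfying the stated assumptions. *)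

theory Defs
  imports "HOL-Probability.Probability"
begin

text \<open>A unit is described by its full-data vector
  (Z, D(1), D(0), Y(1), Y(0), R^D, R^Y).  A joint distribution of the full data is a
  probability measure on this type (with its Borel sigma-algebra).\<close>

type_synonym unit_data = "bool \<times> bool \<times> bool \<times> real \<times> real \<times> bool \<times> bool"

definition Zv :: "unit_data \<Rightarrow> bool" where "Zv w = fst w"
definition D1v :: "unit_data \<Rightarrow> bool" where "D1v w = fst (snd w)"
definition D0v :: "unit_data \<Rightarrow> bool" where "D0v w = fst (snd (snd w))"
definition Y1v :: "unit_data \<Rightarrow> real" where "Y1v w = fst (snd (snd (snd w)))"
definition Y0v :: "unit_data \<Rightarrow> real" where "Y0v w = fst (snd (snd (snd (snd w))))"
definition RDv :: "unit_data \<Rightarrow> bool" where "RDv w = fst (snd (snd (snd (snd (snd w)))))"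
definition RYv :: "unit_data \<Rightarrow> bool" where "RYv w = snd (snd (snd (snd (snd (snd w)))))"

definition Dv :: "unit_data \<Rightarrow> bool" where "Dv w = (if Zv w then D1v w else D0v w)"
definition Yv :: "unit_data \<Rightarrow> real" where "Yv w = (if Zv w then Y1v w else Y0v w)"

datatype compliance = Always | Complier | Defier | Never

definition Uv :: "unit_data \<Rightarrow> compliance" where
  "Uv w = (if D1v w then (if D0v w then Always else Complier)
           else (if D0v w then Defier else Never))"

definition obs :: "unit_data \<Rightarrow> bool \<times> bool \<times> bool \<times> bool \<times> real" where
  "obs w = (Zv w, RDv w, RDv w \<and> Dv w, RYv w, if RYv w then Yv w else 0)"

definition obs_law :: "unit_data measure \<Rightarrow> (bool \<times> bool \<times> bool \<times> bool \<times> real) measure" where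
  "obs_law M = distr M borel obs"

definition ev :: "unit_data measure \<Rightarrow> (unit_data \<Rightarrow> bool) \<Rightarrow> unit_data set" where
  "ev M P = {w \<in> space M. P w}"

definition pr :: "unit_data measure \<Rightarrow> (unit_data \<Rightarrow> bool) \<Rightarrow> real" where
  "pr M P = measure M (ev M P)"

text \<open>Conditional probability P(A | B) (defined as 0 when P(B) = 0).\<close>
definition cpr :: "unit_data measure \<Rightarrow> (unit_data \<Rightarrow> bool) \<Rightarrow> (unit_data \<Rightarrow> bool) \<Rightarrow> real" where
  "cpr M A B = pr M (\<lambda>w. A w \<and> B w) / pr M B"

definition cindep_on :: "unit_data measure \<Rightarrow> (unit_data \<Rightarrow> 'x) \<Rightarrow> (unit_data \<Rightarrow> 'y)
    \<Rightarrow> (unit_data \<Rightarrow> bool) \<Rightarrow> bool" where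
  "cindep_on M X W E \<longleftrightarrow>
     (\<forall>A B. ev M (\<lambda>w. X w \<in> A) \<in> sets M \<longrightarrow> ev M (\<lambda>w. W w \<in> B) \<in> sets M \<longrightarrow>
        pr M (\<lambda>w. X w \<in> A \<and> W w \<in> B \<and> E w) * pr M E
          = pr M (\<lambda>w. X w \<in> A \<and> E w) * pr M (\<lambda>w. W w \<in> B \<and> E w))"

definition cindep :: "unit_data measure \<Rightarrow> (unit_data \<Rightarrow> 'x) \<Rightarrow> (unit_data \<Rightarrow> 'y)
    \<Rightarrow> (unit_data \<Rightarrow> 'c) \<Rightarrow> bool" where
  "cindep M X W C \<longleftrightarrow> (\<forall>c. cindep_on M X W (\<lambda>w. C w = c))"

definition indep :: "unit_data measure \<Rightarrow> (unit_data \<Rightarrow> 'x) \<Rightarrow> (unit_data \<Rightarrow> 'y) \<Rightarrow> bool" where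
  "indep M X W \<longleftrightarrow> cindep_on M X W (\<lambda>w. True)"

text \<open>Standing model: a joint distribution of the full data for which the potential outcomes
  have finite mean (so that the CACE exists) and the IV assumptions (1)-(4) hold.\<close>
definition iv_model :: "unit_data measure \<Rightarrow> bool" where
  "iv_model M \<longleftrightarrow> prob_space M \<and> sets M = sets borel
     \<and> integrable M Y1v \<and> integrable M Y0v
     \<comment> \<open>(1) Z independent of (D(1), D(0), Y(1), Y(0))\<close>
     \<and> indep M Zv (\<lambda>w. (D1v w, D0v w, Y1v w, Y0v w))
     \<comment> \<open>(2) monotonicity: no defiers\<close>
     \<and> (AE w in M. D1v w \<or> \<not> D0v w)
     \<comment> \<open>(3) E(D(1) - D(0)) \<noteq> 0\<close>
     \<and> pr M D1v \<noteq> pr M D0v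
     \<comment> \<open>(4) exclusion restriction for always- and never-takers\<close>
     \<and> (AE w in M. Uv w \<in> {Always, Never} \<longrightarrow> Y1v w = Y0v w)"

definition CACE :: "unit_data measure \<Rightarrow> real" where
  "CACE M = (\<integral>w. (if Uv w = Complier then Y1v w - Y0v w else 0) \<partial>M) / pr M (\<lambda>w. Uv w = Complier)"

definition CACE_identifiable :: "(unit_data measure \<Rightarrow> bool) \<Rightarrow> bool" where
  "CACE_identifiable P \<longleftrightarrow>
     (\<forall>M1 M2. P M1 \<longrightarrow> P M2 \<longrightarrow> obs_law M1 = obs_law M2 \<longrightarrow> CACE M1 = CACE M2)"

definition RD_2Z :: "unit_data measure \<Rightarrow> bool" where
  "RD_2Z M \<longleftrightarrow> cindep M RDv (\<lambda>w. (Uv w, Dv w, Yv w)) Zv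
     \<and> (\<forall>z. cpr M RDv (\<lambda>w. Zv w = z) > 0)"

definition binary_Y :: "unit_data measure \<Rightarrow> bool" where
  "binary_Y M \<longleftrightarrow> (AE w in M. Y1v w \<in> {0, 1} \<and> Y0v w \<in> {0, 1})"

definition two_sided :: "unit_data measure \<Rightarrow> bool" where
  "two_sided M \<longleftrightarrow> pr M (\<lambda>w. Uv w = Always) > 0 \<and> pr M (\<lambda>w. Uv w = Never) > 0"

definition model_1ZD :: "unit_data measure \<Rightarrow> bool" where
  "model_1ZD M \<longleftrightarrow> iv_model M \<and> RD_2Z M
     \<and> cindep M RYv (\<lambda>w. (Uv w, Yv w)) (\<lambda>w. (Zv w, Dv w, RDv w))
     \<and> (\<forall>z d. cpr M RYv (\<lambda>w. Zv w = z \<and> Dv w = d \<and> RDv w) > 0)"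

definition model_1UD :: "unit_data measure \<Rightarrow> bool" where
  "model_1UD M \<longleftrightarrow> iv_model M \<and> RD_2Z M
     \<and> cindep M RYv (\<lambda>w. (Zv w, Yv w)) (\<lambda>w. (Uv w, Dv w, RDv w))
     \<and> (\<forall>d. cpr M RYv (\<lambda>w. Uv w = Complier \<and> Dv w = d \<and> RDv w) > 0)"

definition model_1UY :: "unit_data measure \<Rightarrow> bool" where
  "model_1UY M \<longleftrightarrow> iv_model M \<and> RD_2Z M \<and> binary_Y M
     \<and> cindep M RYv (\<lambda>w. (Zv w, Dv w)) (\<lambda>w. (Uv w, Yv w, RDv w))
     \<and> (\<forall>y\<in>{0, 1}. cpr M RYv (\<lambda>w. Uv w = Complier \<and> Yv w = y \<and> RDv w) > 0)"

definition model_1DY :: "unit_data measure \<Rightarrow> bool" where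
  "model_1DY M \<longleftrightarrow> iv_model M \<and> RD_2Z M \<and> binary_Y M \<and> two_sided M
     \<and> cindep M RYv (\<lambda>w. (Zv w, Uv w)) (\<lambda>w. (Dv w, Yv w, RDv w))
     \<and> (\<forall>d. \<forall>y\<in>{0, 1}. cpr M RYv (\<lambda>w. Dv w = d \<and> Yv w = y \<and> RDv w) > 0)
     \<and> (\<forall>d. \<not> cindep_on M Yv Zv (\<lambda>w. Dv w = d \<and> RDv w))"

definition model_1ZY :: "unit_data measure \<Rightarrow> bool" where
  "model_1ZY M \<longleftrightarrow> iv_model M \<and> RD_2Z M \<and> binary_Y M \<and> two_sided M
     \<and> cindep M RYv (\<lambda>w. (Uv w, Dv w)) (\<lambda>w. (Zv w, Yv w, RDv w))
     \<and> (\<forall>z. \<forall>y\<in>{0, 1}. cpr M RYv (\<lambda>w. Zv w = z \<and> Yv w = y \<and> RDv w) > 0)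
     \<and> (\<forall>z. \<not> cindep_on M Yv Dv (\<lambda>w. Zv w = z))"

end

theory Submission
  imports Defs
begin

(*
  Missingness of D is ignorable within each arm (2Z) and Z is randomized, so among the units of
  arm z with R^D = 1 the triple (U, D, Y) has the law of (U, D(z), Y(z)), scaled by the observed
  weight P(Z = z, R^D = 1).  Hence the share of compliers P(D(1) = 1) - P(D(0) = 1) is identified,
  and by monotonicity and the exclusion restriction the CACE is both
  (E Y(1) - E Y(0)) / P(complier) and (E[Y(1); complier] - E[Y(0); complier]) / P(complier).
  What remains is to recover enough of the law of Y among the units with R^D = 1.

  1ZD: the response of Y is ignorable given (Z, D), so the law of Y in each cell (Z, D) is that of
  its respondents; summing over D gives the law of Y(z).
  1UD: the response is ignorable given (U, D).  In the cell Z = D = z the compliers are mixed only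
  with the units taking treatment z in both arms; these alone form the cell Z = ~z, D = z, and
  their respondents split between the two arms in proportion to P(Z, R^D = 1).  Subtracting them
  leaves the responding compliers, hence the law of Y(z) among compliers.
  1UY, 1DY, 1ZY (binary Y): the responding cells are unknown cell probabilities times response
  rates that depend on y only, and the margins over y are observed.  For a 2x2 table with nonzero
  determinant this forces the rates of any two compatible laws to agree; in 1DY and 1ZY the
  determinant is nonzero by the dependence assumption, and in 1UY a vanishing determinant means a
  vanishing CACE.
*)

section \<open>Rescaled 2x2 tables\<close>

lemma cross_mult_eq_if_proportional:
  fixes a b ka kb c e :: real
  assumes "a * e = c * ka" "b * e = c * kb" "e = 0 \<Longrightarrow> a = 0 \<and> b = 0"
  shows "a * kb = b * ka"
proof (cases "e = 0")
  case False
  have "a * kb * e = b * ka * e"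
    using assms(1,2) by (metis mult.commute mult.left_commute)
  with False show ?thesis
    by simp
qed (use assms(3) in simp)

lemma rescaled_table_eq:
  fixes p q :: "bool \<Rightarrow> real \<Rightarrow> real" and k l :: "real \<Rightarrow> real"
  assumes scale: "\<And>x y. y \<in> {0, 1} \<Longrightarrow> k y * p x y = l y * q x y"
    and l: "l 0 \<noteq> 0" "l 1 \<noteq> 0"
    and margins: "\<And>x. p x 0 + p x 1 = q x 0 + q x 1"
    and det: "p False 0 * p True 1 \<noteq> p False 1 * p True 0"
    and y: "y \<in> {0, 1}"
  shows "q x y = p x y"
proof -
  define a b where "a = k 0 / l 0 - 1" and "b = k 1 / l 1 - 1"
  have q: "q x 0 = (a + 1) * p x 0" "q x 1 = (b + 1) * p x 1" for x
    using scale[of 0 x] scale[of 1 x] l by (simp_all add: a_def b_def field_simps)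
  have lin: "a * p x 0 + b * p x 1 = 0" for x
    using margins[of x] by (simp add: q algebra_simps)
  have "a * (p False 0 * p True 1 - p False 1 * p True 0) = 0"
    and "b * (p False 0 * p True 1 - p False 1 * p True 0) = 0"
    using lin[of False] lin[of True] by algebra+
  with det have "a = 0" "b = 0"
    by simp_all
  with y show ?thesis
    by (auto simp: q)
qed

lemma rescaled_table_diff_eq:
  fixes p q :: "bool \<Rightarrow> real \<Rightarrow> real" and k l :: "real \<Rightarrow> real"
  assumes scale: "\<And>x y. y \<in> {0, 1} \<Longrightarrow> k y * p x y = l y * q x y"
    and l: "l 0 \<noteq> 0" "l 1 \<noteq> 0"
    and p_rows: "\<And>x. p x 0 + p x 1 = s" and q_rows: "\<And>x. q x 0 + q x 1 = s"
    and s: "s \<noteq> 0"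
  shows "p True 1 - p False 1 = q True 1 - q False 1"
proof (cases "p False 0 * p True 1 = p False 1 * p True 0")
  case True
  have "p False 0 * p True 1 - p False 1 * p True 0
      = (p False 0 + p False 1) * p True 1 - p False 1 * (p True 0 + p True 1)"
    by (simp add: algebra_simps)
  also have "\<dots> = s * (p True 1 - p False 1)"
    by (simp only: p_rows) (simp add: algebra_simps)
  finally have "p True 1 = p False 1"
    using True s by simp
  moreover have "q x 1 = k 1 / l 1 * p x 1" for x
    using scale[of 1 x] l by (simp add: field_simps)
  ultimately show ?thesis
    by simp
next
  case False
  have "q x 1 = p x 1" for x
    by (rule rescaled_table_eq[OF scale l _ False]) (simp_all add: p_rows q_rows)
  then show ?thesis
    by simp
qed

(* A rank-one 2x2 table (a b; c d): the mass of a rectangle times the total mass equals the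
   product of the masses of its row and column strips. *)
lemma rank_one_margins_mult:
  fixes a b c d :: real
  assumes "a * d = b * c"
  shows "((if s0 \<and> tT then a else 0) + (if s0 \<and> tF then b else 0)
        + (if s1 \<and> tT then c else 0) + (if s1 \<and> tF then d else 0)) * (a + b + c + d)
    = ((if s0 then a else 0) + (if s0 then b else 0) + (if s1 then c else 0) + (if s1 then d else 0))
      * ((if tT then a else 0) + (if tF then b else 0) + (if tT then c else 0) + (if tF then d else 0))"
  using assms by (cases s0; cases s1; cases tT; cases tF) (simp_all add: algebra_simps)

section \<open>Measurability of the unit variables and observable events\<close>

instance bool :: second_countable_topology
proof
  show "\<exists>B::bool set set. countable B \<and> open = generate_topology B"
    by (intro exI[of _ "range lessThan \<union> range greaterThan"]) (auto simp: open_bool_def)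
qed

lemma measurable_bool_borel_iff:
  "(f :: 'a \<Rightarrow> bool) \<in> M \<rightarrow>\<^sub>M borel \<longleftrightarrow> f \<in> M \<rightarrow>\<^sub>M count_space UNIV"
  using measurable_cong_sets[OF refl sets_borel_eq_count_space[where 'a=bool], of M] by simp

lemma Times_in_sets_borel:
  "A \<in> sets borel \<Longrightarrow> B \<in> sets borel \<Longrightarrow>
    A \<times> B \<in> sets (borel :: ('a::second_countable_topology \<times> 'b::second_countable_topology) measure)"
  unfolding borel_prod[symmetric] by (rule pair_measureI)

lemma bool_set_in_sets_borel [simp]: "(A :: bool set) \<in> sets borel"
  by (simp add: sets_borel_eq_count_space)

lemma measurable_Zv [measurable]: "Zv \<in> borel \<rightarrow>\<^sub>M count_space UNIV"
  and measurable_D1v [measurable]: "D1v \<in> borel \<rightarrow>\<^sub>M count_space UNIV"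
  and measurable_D0v [measurable]: "D0v \<in> borel \<rightarrow>\<^sub>M count_space UNIV"
  and measurable_RDv [measurable]: "RDv \<in> borel \<rightarrow>\<^sub>M count_space UNIV"
  and measurable_RYv [measurable]: "RYv \<in> borel \<rightarrow>\<^sub>M count_space UNIV"
  and measurable_Y1v [measurable]: "Y1v \<in> borel_measurable borel"
  and measurable_Y0v [measurable]: "Y0v \<in> borel_measurable borel"
  unfolding Zv_def[abs_def] D1v_def[abs_def] D0v_def[abs_def] RDv_def[abs_def] RYv_def[abs_def]
    Y1v_def[abs_def] Y0v_def[abs_def] measurable_bool_borel_iff[symmetric]
  by (intro borel_measurable_continuous_onI continuous_intros)+

definition Dpot :: "bool \<Rightarrow> unit_data \<Rightarrow> bool" where
  "Dpot z w = (if z then D1v w else D0v w)"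

definition Ypot :: "bool \<Rightarrow> unit_data \<Rightarrow> real" where
  "Ypot z w = (if z then Y1v w else Y0v w)"

lemma Ypot_simps [simp]: "Ypot True = Y1v" "Ypot False = Y0v" "Ypot True w = Y1v w" "Ypot False w = Y0v w"
  by (simp_all add: Ypot_def[abs_def])

lemma Dpot_simps [simp]: "Dpot True = D1v" "Dpot False = D0v" "Dpot True w = D1v w" "Dpot False w = D0v w"
  by (simp_all add: Dpot_def[abs_def])

lemma Dv_eq_Dpot: "Dv w = Dpot (Zv w) w" and Yv_eq_Ypot: "Yv w = Ypot (Zv w) w"
  by (simp_all add: Dv_def Dpot_def Yv_def Ypot_def)

lemma measurable_Dv [measurable]: "Dv \<in> borel \<rightarrow>\<^sub>M count_space UNIV"
  unfolding Dv_def[abs_def] by measurable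

lemma measurable_Yv [measurable]: "Yv \<in> borel_measurable borel"
  unfolding Yv_def[abs_def] by measurable

lemma measurable_Uv [measurable]: "Uv \<in> borel \<rightarrow>\<^sub>M count_space UNIV"
  unfolding Uv_def[abs_def] by measurable

lemma measurable_Dpot [measurable]: "Dpot z \<in> borel \<rightarrow>\<^sub>M count_space UNIV"
  and measurable_Ypot [measurable]: "Ypot z \<in> borel_measurable borel"
  by (cases z; simp)+

lemma measurable_obs: "obs \<in> borel_measurable borel"
proof -
  have pred_borel: "Measurable.pred borel P \<Longrightarrow> P \<in> borel_measurable borel" for P :: "unit_data \<Rightarrow> bool"
    by (simp add: measurable_bool_borel_iff)
  show ?thesis
    unfolding obs_def[abs_def] by (intro borel_measurable_Pair pred_borel) measurable
qed

definition observable :: "(unit_data \<Rightarrow> bool) \<Rightarrow> bool" where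
  "observable P \<longleftrightarrow> (\<exists>S \<in> sets borel. \<forall>w. P w \<longleftrightarrow> obs w \<in> S)"

lemma observableI: "S \<in> sets borel \<Longrightarrow> (\<And>w. P w \<longleftrightarrow> obs w \<in> S) \<Longrightarrow> observable P"
  unfolding observable_def by blast

lemma observable_Z_RD: "observable (\<lambda>w. Zv w = z \<and> RDv w)"
  by (rule observableI[of "{z} \<times> {True} \<times> UNIV"]) (auto intro!: Times_in_sets_borel simp: obs_def)

lemma observable_Z_RD_D: "observable (\<lambda>w. Zv w = z \<and> RDv w \<and> Dv w = d)"
  by (rule observableI[of "{z} \<times> {True} \<times> {d} \<times> UNIV"])
    (auto intro!: Times_in_sets_borel simp: obs_def)

lemma observable_Z_RD_D_RY_Y:
  "B \<in> sets borel \<Longrightarrow> observable (\<lambda>w. Zv w = z \<and> RDv w \<and> Dv w = d \<and> RYv w \<and> Yv w \<in> B)"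
  by (rule observableI[of "{z} \<times> {True} \<times> {d} \<times> {True} \<times> B"])
    (auto intro!: Times_in_sets_borel simp: obs_def)

lemma observable_Z_RD_D_RY: "observable (\<lambda>w. Zv w = z \<and> RDv w \<and> Dv w = d \<and> RYv w)"
  using observable_Z_RD_D_RY_Y[of UNIV] by simp

lemma cpr_posD:
  assumes "0 < cpr M A B"
  shows "0 < pr M (\<lambda>w. A w \<and> B w)" and "0 < pr M B"
  using assms by (auto simp: cpr_def pr_def zero_less_divide_iff)

locale iv =
  fixes M :: "unit_data measure"
  assumes iv_model: "iv_model M"
begin

sublocale prob_space M
  using iv_model by (simp add: iv_model_def)

lemma sets_eq_borel: "sets M = sets borel"
  using iv_model by (simp add: iv_model_def)

lemma space_eq_UNIV: "space M = UNIV"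
  using sets_eq_imp_space_eq[OF sets_eq_borel] by simp

lemma measurable_M_iff: "f \<in> M \<rightarrow>\<^sub>M N \<longleftrightarrow> f \<in> borel \<rightarrow>\<^sub>M N"
  by (simp add: measurable_cong_sets[OF sets_eq_borel refl])

lemma ev_eq: "ev M P = {w. P w}"
  by (simp add: ev_def space_eq_UNIV)

lemma pr_eq_measure: "pr M P = measure M {w. P w}"
  by (simp add: pr_def ev_eq)

lemma sets_Collect_pred: "Measurable.pred borel P \<Longrightarrow> {w. P w} \<in> sets M"
  unfolding pred_def by (simp add: sets_eq_borel)

lemma pr_cong: "(\<And>w. P w \<longleftrightarrow> Q w) \<Longrightarrow> pr M P = pr M Q"
  by (rule arg_cong[of _ _ "pr M"]) blast

lemma pr_nonneg: "0 \<le> pr M P"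
  by (simp add: pr_eq_measure)

lemma pr_True: "pr M (\<lambda>w. True) = 1"
  by (simp add: pr_eq_measure space_eq_UNIV[symmetric] prob_space)

lemma pr_False: "pr M (\<lambda>w. False) = 0"
  by (simp add: pr_eq_measure)

lemma pr_mono:
  assumes "Measurable.pred borel Q" "\<And>w. P w \<Longrightarrow> Q w"
  shows "pr M P \<le> pr M Q"
  unfolding pr_eq_measure using assms by (intro finite_measure_mono sets_Collect_pred) auto

lemma pr_split:
  assumes [measurable]: "Measurable.pred borel P" "Measurable.pred borel Q"
  shows "pr M P = pr M (\<lambda>w. P w \<and> Q w) + pr M (\<lambda>w. P w \<and> \<not> Q w)"
proof -
  have "{w. P w} = {w. P w \<and> Q w} \<union> {w. P w \<and> \<not> Q w}" by blast
  then show ?thesis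
    unfolding pr_eq_measure by (simp add: finite_measure_Union sets_Collect_pred disjoint_iff)
qed

lemma pr_cong_AE:
  assumes "AE w in M. P w \<longleftrightarrow> Q w" "Measurable.pred borel P" "Measurable.pred borel Q"
  shows "pr M P = pr M Q"
  unfolding pr_eq_measure using assms by (intro measure_eq_AE sets_Collect_pred) auto

lemma pr_const_conj: "pr M (\<lambda>w. c \<and> P w) = (if c then pr M P else 0)"
  by (simp add: pr_False)

lemma cindep_pr_mult:
  assumes "cindep M X W C" "Measurable.pred borel X" "Measurable.pred borel (\<lambda>w. W w \<in> B)"
  shows "pr M (\<lambda>w. X w \<and> W w \<in> B \<and> C w = c) * pr M (\<lambda>w. C w = c)
       = pr M (\<lambda>w. X w \<and> C w = c) * pr M (\<lambda>w. W w \<in> B \<and> C w = c)"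
proof -
  have "cindep_on M X W (\<lambda>w. C w = c)"
    using assms(1) by (simp add: cindep_def)
  moreover have "ev M (\<lambda>w. X w \<in> {True}) \<in> sets M" "ev M (\<lambda>w. W w \<in> B) \<in> sets M"
    using assms(2,3) by (simp_all add: ev_eq sets_Collect_pred)
  ultimately have "pr M (\<lambda>w. X w \<in> {True} \<and> W w \<in> B \<and> C w = c) * pr M (\<lambda>w. C w = c)
      = pr M (\<lambda>w. X w \<in> {True} \<and> C w = c) * pr M (\<lambda>w. W w \<in> B \<and> C w = c)"
    unfolding cindep_on_def by (elim allE impE)
  then show ?thesis
    by simp
qed

lemma pr_Z_indep:
  assumes "Measurable.pred borel (\<lambda>w. Q (D1v w, D0v w, Y1v w, Y0v w))"
  shows "pr M (\<lambda>w. Zv w = z \<and> Q (D1v w, D0v w, Y1v w, Y0v w))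
       = pr M (\<lambda>w. Zv w = z) * pr M (\<lambda>w. Q (D1v w, D0v w, Y1v w, Y0v w))"
proof -
  have "indep M Zv (\<lambda>w. (D1v w, D0v w, Y1v w, Y0v w))"
    using iv_model by (simp add: iv_model_def)
  moreover have "ev M (\<lambda>w. Zv w \<in> {z}) \<in> sets M"
    and "ev M (\<lambda>w. (D1v w, D0v w, Y1v w, Y0v w) \<in> Collect Q) \<in> sets M"
    using assms by (simp_all add: ev_eq sets_Collect_pred)
  ultimately have "pr M (\<lambda>w. Zv w \<in> {z} \<and> (D1v w, D0v w, Y1v w, Y0v w) \<in> Collect Q \<and> True)
      * pr M (\<lambda>w. True) = pr M (\<lambda>w. Zv w \<in> {z} \<and> True)
          * pr M (\<lambda>w. (D1v w, D0v w, Y1v w, Y0v w) \<in> Collect Q \<and> True)"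
    unfolding indep_def cindep_on_def by (elim allE impE)
  then show ?thesis
    by (simp add: pr_True)
qed

lemma AE_no_defier: "AE w in M. Uv w \<noteq> Defier"
proof -
  have "AE w in M. D1v w \<or> \<not> D0v w"
    using iv_model by (simp add: iv_model_def)
  then show ?thesis
    by eventually_elim (auto simp: Uv_def)
qed

lemma AE_exclusion: "AE w in M. Uv w \<in> {Always, Never} \<longrightarrow> Y1v w = Y0v w"
  using iv_model by (simp add: iv_model_def)

lemma pr_complier: "pr M (\<lambda>w. Uv w = Complier) = pr M D1v - pr M D0v"
proof -
  have "AE w in M. D0v w \<longleftrightarrow> D1v w \<and> D0v w"
    using AE_no_defier by eventually_elim (auto simp: Uv_def split: if_splits)
  then have "pr M D0v = pr M (\<lambda>w. D1v w \<and> D0v w)"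
    by (rule pr_cong_AE) measurable
  moreover have "pr M D1v = pr M (\<lambda>w. D1v w \<and> D0v w) + pr M (\<lambda>w. D1v w \<and> \<not> D0v w)"
    by (rule pr_split) measurable
  moreover have "pr M (\<lambda>w. Uv w = Complier) = pr M (\<lambda>w. D1v w \<and> \<not> D0v w)"
    by (rule pr_cong) (simp add: Uv_def)
  ultimately show ?thesis
    by simp
qed

lemma pr_complier_neq_0: "pr M (\<lambda>w. Uv w = Complier) \<noteq> 0"
  using iv_model by (simp add: pr_complier iv_model_def)

lemma AE_Yv_binary:
  assumes "binary_Y M"
  shows "AE w in M. Yv w \<in> {0, 1}"
  using assms unfolding binary_Y_def by eventually_elim (simp add: Yv_def)

lemma AE_Ypot_binary:
  assumes "binary_Y M"
  shows "AE w in M. Ypot z w \<in> {0, 1}"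
  using assms unfolding binary_Y_def by eventually_elim (simp add: Ypot_def)

lemma pr_split_binary:
  fixes f :: "unit_data \<Rightarrow> real"
  assumes "AE w in M. f w \<in> {0, 1}"
    and [measurable]: "Measurable.pred borel P" "\<And>c. Measurable.pred borel (\<lambda>w. f w = c)"
  shows "pr M P = pr M (\<lambda>w. P w \<and> f w = 0) + pr M (\<lambda>w. P w \<and> f w = 1)"
proof -
  have split: "pr M P = pr M (\<lambda>w. P w \<and> f w = 1) + pr M (\<lambda>w. P w \<and> f w \<noteq> 1)"
    by (rule pr_split) measurable
  have "AE w in M. P w \<and> f w \<noteq> 1 \<longleftrightarrow> P w \<and> f w = 0"
    using assms(1) by eventually_elim auto
  then have "pr M (\<lambda>w. P w \<and> f w \<noteq> 1) = pr M (\<lambda>w. P w \<and> f w = 0)"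
    by (rule pr_cong_AE) measurable
  with split show ?thesis
    by simp
qed

lemma pr_Z_RD_Y_split_D:
  assumes [measurable]: "B \<in> sets borel"
  shows "pr M (\<lambda>w. Zv w = z \<and> RDv w \<and> Yv w \<in> B)
    = pr M (\<lambda>w. Zv w = z \<and> RDv w \<and> Dv w \<and> Yv w \<in> B) + pr M (\<lambda>w. Zv w = z \<and> RDv w \<and> \<not> Dv w \<and> Yv w \<in> B)"
proof -
  have "pr M (\<lambda>w. Zv w = z \<and> RDv w \<and> Yv w \<in> B) = pr M (\<lambda>w. (Zv w = z \<and> RDv w \<and> Yv w \<in> B) \<and> Dv w)
      + pr M (\<lambda>w. (Zv w = z \<and> RDv w \<and> Yv w \<in> B) \<and> \<not> Dv w)"
    by (rule pr_split) measurable
  also have "\<dots> = pr M (\<lambda>w. Zv w = z \<and> RDv w \<and> Dv w \<and> Yv w \<in> B)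
      + pr M (\<lambda>w. Zv w = z \<and> RDv w \<and> \<not> Dv w \<and> Yv w \<in> B)"
    by (intro arg_cong2[where f="(+)"] pr_cong) auto
  finally show ?thesis .
qed

lemma pr_by_Y_X_cells:
  fixes X :: "unit_data \<Rightarrow> bool"
  assumes binary: "AE w in M. Yv w \<in> {0, 1}"
    and [measurable]: "Measurable.pred borel E" "Measurable.pred borel X"
      "Measurable.pred borel (\<lambda>w. R (Yv w) (X w))"
  shows "pr M (\<lambda>w. R (Yv w) (X w) \<and> E w)
    = (if R 0 True then pr M (\<lambda>w. E w \<and> X w \<and> Yv w = 0) else 0)
    + (if R 0 False then pr M (\<lambda>w. E w \<and> \<not> X w \<and> Yv w = 0) else 0)
    + (if R 1 True then pr M (\<lambda>w. E w \<and> X w \<and> Yv w = 1) else 0)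
    + (if R 1 False then pr M (\<lambda>w. E w \<and> \<not> X w \<and> Yv w = 1) else 0)"
proof -
  have cell: "pr M (\<lambda>w. (R (Yv w) (X w) \<and> E w \<and> Yv w = y) \<and> X w = x)
      = (if R y x then pr M (\<lambda>w. E w \<and> X w = x \<and> Yv w = y) else 0)" for x y
    by (subst pr_const_conj[symmetric]) (rule pr_cong, auto)
  have "pr M (\<lambda>w. R (Yv w) (X w) \<and> E w \<and> Yv w = y)
      = pr M (\<lambda>w. (R (Yv w) (X w) \<and> E w \<and> Yv w = y) \<and> X w = True)
      + pr M (\<lambda>w. (R (Yv w) (X w) \<and> E w \<and> Yv w = y) \<and> X w = False)" for y
    using pr_split[of "\<lambda>w. R (Yv w) (X w) \<and> E w \<and> Yv w = y" X] by simp
  moreover have "pr M (\<lambda>w. R (Yv w) (X w) \<and> E w)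
      = pr M (\<lambda>w. R (Yv w) (X w) \<and> E w \<and> Yv w = 0) + pr M (\<lambda>w. R (Yv w) (X w) \<and> E w \<and> Yv w = 1)"
    using pr_split_binary[OF binary, of "\<lambda>w. R (Yv w) (X w) \<and> E w"] by simp
  ultimately show ?thesis
    unfolding cell by simp
qed

lemma cindep_on_Yv_if_rank_one:
  fixes X :: "unit_data \<Rightarrow> bool"
  assumes binary: "AE w in M. Yv w \<in> {0, 1}"
    and [measurable]: "Measurable.pred borel E" "Measurable.pred borel X"
    and rank_one: "pr M (\<lambda>w. E w \<and> X w \<and> Yv w = 0) * pr M (\<lambda>w. E w \<and> \<not> X w \<and> Yv w = 1)
      = pr M (\<lambda>w. E w \<and> \<not> X w \<and> Yv w = 0) * pr M (\<lambda>w. E w \<and> X w \<and> Yv w = 1)"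
  shows "cindep_on M Yv X E"
  unfolding cindep_on_def
proof (intro allI impI)
  fix A B
  assume "ev M (\<lambda>w. Yv w \<in> A) \<in> sets M" "ev M (\<lambda>w. X w \<in> B) \<in> sets M"
  then have [measurable]: "Measurable.pred borel (\<lambda>w. Yv w \<in> A)" "Measurable.pred borel (\<lambda>w. X w \<in> B)"
    by (simp_all add: ev_eq sets_eq_borel pred_def)
  note cells = pr_by_Y_X_cells[OF binary, of E X]
  have "pr M (\<lambda>w. Yv w \<in> A \<and> X w \<in> B \<and> E w)
    = (if 0 \<in> A \<and> True \<in> B then pr M (\<lambda>w. E w \<and> X w \<and> Yv w = 0) else 0)
    + (if 0 \<in> A \<and> False \<in> B then pr M (\<lambda>w. E w \<and> \<not> X w \<and> Yv w = 0) else 0)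
    + (if 1 \<in> A \<and> True \<in> B then pr M (\<lambda>w. E w \<and> X w \<and> Yv w = 1) else 0)
    + (if 1 \<in> A \<and> False \<in> B then pr M (\<lambda>w. E w \<and> \<not> X w \<and> Yv w = 1) else 0)"
    by (rule cells[of "\<lambda>y x. y \<in> A \<and> x \<in> B", simplified conj_assoc]) measurable
  moreover have "pr M (\<lambda>w. Yv w \<in> A \<and> E w)
    = (if 0 \<in> A then pr M (\<lambda>w. E w \<and> X w \<and> Yv w = 0) else 0)
    + (if 0 \<in> A then pr M (\<lambda>w. E w \<and> \<not> X w \<and> Yv w = 0) else 0)
    + (if 1 \<in> A then pr M (\<lambda>w. E w \<and> X w \<and> Yv w = 1) else 0)
    + (if 1 \<in> A then pr M (\<lambda>w. E w \<and> \<not> X w \<and> Yv w = 1) else 0)"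
    by (rule cells) measurable
  moreover have "pr M (\<lambda>w. X w \<in> B \<and> E w)
    = (if True \<in> B then pr M (\<lambda>w. E w \<and> X w \<and> Yv w = 0) else 0)
    + (if False \<in> B then pr M (\<lambda>w. E w \<and> \<not> X w \<and> Yv w = 0) else 0)
    + (if True \<in> B then pr M (\<lambda>w. E w \<and> X w \<and> Yv w = 1) else 0)
    + (if False \<in> B then pr M (\<lambda>w. E w \<and> \<not> X w \<and> Yv w = 1) else 0)"
    by (rule cells) measurable
  moreover have "pr M E = pr M (\<lambda>w. E w \<and> X w \<and> Yv w = 0) + pr M (\<lambda>w. E w \<and> \<not> X w \<and> Yv w = 0)
    + pr M (\<lambda>w. E w \<and> X w \<and> Yv w = 1) + pr M (\<lambda>w. E w \<and> \<not> X w \<and> Yv w = 1)"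
    using cells[of "\<lambda>y x. True"] by simp
  ultimately show "pr M (\<lambda>w. Yv w \<in> A \<and> X w \<in> B \<and> E w) * pr M E
      = pr M (\<lambda>w. Yv w \<in> A \<and> E w) * pr M (\<lambda>w. X w \<in> B \<and> E w)"
    using rank_one_margins_mult[OF rank_one] by presburger
qed

lemma integrable_Ypot: "integrable M (Ypot z)"
  using iv_model by (cases z) (simp_all add: iv_model_def)

lemma integrable_complier_Ypot: "integrable M (\<lambda>w. if Uv w = Complier then Ypot z w else 0)"
  by (rule Bochner_Integration.integrable_bound[OF integrable_Ypot]) (auto simp: measurable_M_iff)

lemma CACE_eq_mean_diff:
  "CACE M = (integral\<^sup>L M Y1v - integral\<^sup>L M Y0v) / pr M (\<lambda>w. Uv w = Complier)"
proof -
  have "AE w in M. (if Uv w = Complier then Y1v w - Y0v w else 0) = Y1v w - Y0v w"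
    using AE_no_defier AE_exclusion
  proof eventually_elim
    case (elim w)
    then show ?case
      by (cases "Uv w") auto
  qed
  then have "(\<integral>w. (if Uv w = Complier then Y1v w - Y0v w else 0) \<partial>M) = (\<integral>w. Y1v w - Y0v w \<partial>M)"
    by (rule integral_cong_AE[rotated 2]) (simp_all add: measurable_M_iff)
  then show ?thesis
    using integrable_Ypot[of True] integrable_Ypot[of False] by (simp add: CACE_def)
qed

lemma CACE_eq_complier_mean_diff:
  "CACE M = ((\<integral>w. (if Uv w = Complier then Y1v w else 0) \<partial>M)
      - (\<integral>w. (if Uv w = Complier then Y0v w else 0) \<partial>M)) / pr M (\<lambda>w. Uv w = Complier)"
proof -
  have "(\<integral>w. (if Uv w = Complier then Y1v w - Y0v w else 0) \<partial>M)
      = (\<integral>w. (if Uv w = Complier then Y1v w else 0) - (if Uv w = Complier then Y0v w else 0) \<partial>M)"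
    by (rule Bochner_Integration.integral_cong) auto
  also have "\<dots> = (\<integral>w. (if Uv w = Complier then Y1v w else 0) \<partial>M)
      - (\<integral>w. (if Uv w = Complier then Y0v w else 0) \<partial>M)"
    using integrable_complier_Ypot[of True, unfolded Ypot_simps]
      integrable_complier_Ypot[of False, unfolded Ypot_simps] by simp
  finally show ?thesis
    by (simp add: CACE_def)
qed

lemma emeasure_distr_eq_pr:
  assumes "f \<in> borel_measurable borel" "B \<in> sets borel"
  shows "emeasure (distr M borel f) B = pr M (\<lambda>w. f w \<in> B)"
proof -
  have "emeasure (distr M borel f) B = emeasure M (f -` B \<inter> space M)"
    using assms by (intro emeasure_distr) (simp_all add: measurable_M_iff)
  then show ?thesis
    by (simp add: emeasure_eq_measure pr_eq_measure space_eq_UNIV vimage_def)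
qed

lemma integral_eq_pr_if_binary:
  assumes [measurable]: "f \<in> borel_measurable borel" and "AE w in M. f w \<in> {0, 1}"
  shows "integral\<^sup>L M f = pr M (\<lambda>w. f w = 1)"
proof -
  have "AE w in M. f w = indicator {w. f w = 1} w"
    using assms(2) by eventually_elim (auto simp: indicator_def)
  then have "integral\<^sup>L M f = integral\<^sup>L M (indicator {w. f w = 1} :: unit_data \<Rightarrow> real)"
    by (rule integral_cong_AE[rotated 2]) (simp_all add: measurable_M_iff)
  then show ?thesis
    by (simp add: pr_eq_measure space_eq_UNIV)
qed

lemma integral_Ypot_binary:
  assumes "binary_Y M"
  shows "integral\<^sup>L M (Ypot z) = pr M (\<lambda>w. Ypot z w = 1)"
  using AE_Ypot_binary[OF assms] by (rule integral_eq_pr_if_binary[rotated]) measurable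

lemma pr_complier_Ypot_in:
  assumes [measurable]: "B \<in> sets borel"
  shows "pr M (\<lambda>w. (if Uv w = Complier then Ypot z w else 0) \<in> B)
    = pr M (\<lambda>w. Uv w = Complier \<and> Ypot z w \<in> B) + (if 0 \<in> B then 1 - pr M (\<lambda>w. Uv w = Complier) else 0)"
proof -
  have "pr M (\<lambda>w. (if Uv w = Complier then Ypot z w else 0) \<in> B)
      = pr M (\<lambda>w. Uv w = Complier \<and> Ypot z w \<in> B) + pr M (\<lambda>w. 0 \<in> B \<and> Uv w \<noteq> Complier)"
    by (subst pr_split[where Q="\<lambda>w. Uv w = Complier"]) (auto intro!: arg_cong2[where f="(+)"] pr_cong)
  moreover have "pr M (\<lambda>w. Uv w \<noteq> Complier) = 1 - pr M (\<lambda>w. Uv w = Complier)"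
    using pr_split[of "\<lambda>w. True" "\<lambda>w. Uv w = Complier"] by (simp add: pr_True)
  ultimately show ?thesis
    by (cases "0 \<in> B") (simp_all add: pr_False)
qed

lemma CACE_eq_complier_pr_diff:
  assumes "binary_Y M"
  shows "CACE M = (pr M (\<lambda>w. Uv w = Complier \<and> Y1v w = 1) - pr M (\<lambda>w. Uv w = Complier \<and> Y0v w = 1))
    / pr M (\<lambda>w. Uv w = Complier)"
proof -
  have "integral\<^sup>L M (\<lambda>w. if Uv w = Complier then Ypot z w else 0)
      = pr M (\<lambda>w. Uv w = Complier \<and> Ypot z w = 1)" for z
  proof -
    have "AE w in M. (if Uv w = Complier then Ypot z w else 0) \<in> {0, 1}"
      using AE_Ypot_binary[OF assms, of z] by eventually_elim simp
    then have "integral\<^sup>L M (\<lambda>w. if Uv w = Complier then Ypot z w else 0)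
        = pr M (\<lambda>w. (if Uv w = Complier then Ypot z w else 0) = 1)"
      by (intro integral_eq_pr_if_binary) simp_all
    also have "\<dots> = pr M (\<lambda>w. Uv w = Complier \<and> Ypot z w = 1)"
      by (rule pr_cong) simp
    finally show ?thesis .
  qed
  from this[of True, unfolded Ypot_simps] this[of False, unfolded Ypot_simps] show ?thesis
    by (simp add: CACE_eq_complier_mean_diff)
qed

end

section \<open>Ignorable missingness of the treatment\<close>

definition taker :: "bool \<Rightarrow> compliance" where
  "taker d = (if d then Always else Never)"

lemma Dv_taker: "Uv w = taker z \<Longrightarrow> Dv w = z"
  and Dv_complier: "Uv w = Complier \<Longrightarrow> Dv w = Zv w"
  by (auto simp: Uv_def Dv_def taker_def split: if_splits)

(* The responding cell Z = D = z minus its takers of treatment z, whose number is extrapolated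
   from the cell Z = ~z, D = z where they are alone. *)
definition complier_obs :: "unit_data measure \<Rightarrow> bool \<Rightarrow> real set \<Rightarrow> real" where
  "complier_obs M z B = pr M (\<lambda>w. Zv w = z \<and> RDv w \<and> Dv w = z \<and> RYv w \<and> Yv w \<in> B)
     - pr M (\<lambda>w. Zv w = (\<not> z) \<and> RDv w \<and> Dv w = z \<and> RYv w \<and> Yv w \<in> B)
       * pr M (\<lambda>w. Zv w = z \<and> RDv w) / pr M (\<lambda>w. Zv w = (\<not> z) \<and> RDv w)"

locale iv_2Z = iv +
  assumes RD_2Z: "RD_2Z M"
begin

lemma RD_cindep: "cindep M RDv (\<lambda>w. (Uv w, Dv w, Yv w)) Zv"
  using RD_2Z by (simp add: RD_2Z_def)

lemma pr_Z_pos: "0 < pr M (\<lambda>w. Zv w = z)"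
  and pr_Z_RD_pos: "0 < pr M (\<lambda>w. Zv w = z \<and> RDv w)"
proof -
  have "0 < cpr M RDv (\<lambda>w. Zv w = z)"
    using RD_2Z by (simp add: RD_2Z_def)
  moreover have "pr M (\<lambda>w. RDv w \<and> Zv w = z) = pr M (\<lambda>w. Zv w = z \<and> RDv w)"
    by (rule pr_cong) blast
  ultimately show "0 < pr M (\<lambda>w. Zv w = z)" "0 < pr M (\<lambda>w. Zv w = z \<and> RDv w)"
    using cpr_posD by metis+
qed

lemma pr_Z_RD_potential:
  assumes "Measurable.pred borel (\<lambda>w. S (Uv w) (Dv w) (Yv w))"
    and "Measurable.pred borel (\<lambda>w. S (Uv w) (Dpot z w) (Ypot z w))"
  shows "pr M (\<lambda>w. Zv w = z \<and> RDv w \<and> S (Uv w) (Dv w) (Yv w))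
       = pr M (\<lambda>w. Zv w = z \<and> RDv w) * pr M (\<lambda>w. S (Uv w) (Dpot z w) (Ypot z w))"
proof -
  define Q where "Q = (\<lambda>(d1, d0, y1, y0). S
    (if d1 then if d0 then Always else Complier else if d0 then Defier else Never)
    (if z then d1 else d0) (if z then y1 else y0))"
  have Q: "Q (D1v w, D0v w, Y1v w, Y0v w) \<longleftrightarrow> S (Uv w) (Dpot z w) (Ypot z w)" for w
    by (simp add: Q_def Uv_def Dpot_def Ypot_def)
  have "pr M (\<lambda>w. RDv w \<and> (Uv w, Dv w, Yv w) \<in> {(u, d, y). S u d y} \<and> Zv w = z) * pr M (\<lambda>w. Zv w = z)
      = pr M (\<lambda>w. RDv w \<and> Zv w = z) * pr M (\<lambda>w. (Uv w, Dv w, Yv w) \<in> {(u, d, y). S u d y} \<and> Zv w = z)"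
    using assms(1) by (intro cindep_pr_mult[OF RD_cindep measurable_RDv]) simp
  moreover have "pr M (\<lambda>w. (Uv w, Dv w, Yv w) \<in> {(u, d, y). S u d y} \<and> Zv w = z)
      = pr M (\<lambda>w. Zv w = z \<and> Q (D1v w, D0v w, Y1v w, Y0v w))"
    by (rule pr_cong) (auto simp: Q Dv_eq_Dpot Yv_eq_Ypot)
  moreover have "pr M (\<lambda>w. Zv w = z \<and> Q (D1v w, D0v w, Y1v w, Y0v w))
      = pr M (\<lambda>w. Zv w = z) * pr M (\<lambda>w. S (Uv w) (Dpot z w) (Ypot z w))"
    using pr_Z_indep[of Q z] assms(2) by (simp add: Q)
  ultimately have "pr M (\<lambda>w. Zv w = z \<and> RDv w \<and> S (Uv w) (Dv w) (Yv w)) * pr M (\<lambda>w. Zv w = z)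
      = (pr M (\<lambda>w. Zv w = z \<and> RDv w) * pr M (\<lambda>w. S (Uv w) (Dpot z w) (Ypot z w))) * pr M (\<lambda>w. Zv w = z)"
    by (simp add: conj_ac mult_ac)
  then show ?thesis
    using pr_Z_pos[of z] by simp
qed

lemma pr_Dpot:
  "pr M (Dpot z) = pr M (\<lambda>w. Zv w = z \<and> RDv w \<and> Dv w) / pr M (\<lambda>w. Zv w = z \<and> RDv w)"
  using pr_Z_RD_potential[of "\<lambda>u d y. d" z] pr_Z_RD_pos[of z] by (simp add: field_simps)

lemma pr_Ypot:
  assumes [measurable]: "B \<in> sets borel"
  shows "pr M (\<lambda>w. Ypot z w \<in> B) = pr M (\<lambda>w. Zv w = z \<and> RDv w \<and> Yv w \<in> B) / pr M (\<lambda>w. Zv w = z \<and> RDv w)"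
  using pr_Z_RD_potential[of "\<lambda>u d y. y \<in> B" z] pr_Z_RD_pos[of z] by (simp add: field_simps)

lemma pr_complier_Ypot:
  assumes [measurable]: "B \<in> sets borel"
  shows "pr M (\<lambda>w. Uv w = Complier \<and> Ypot z w \<in> B)
    = pr M (\<lambda>w. Zv w = z \<and> RDv w \<and> Uv w = Complier \<and> Yv w \<in> B) / pr M (\<lambda>w. Zv w = z \<and> RDv w)"
  using pr_Z_RD_potential[of "\<lambda>u d y. u = Complier \<and> y \<in> B" z] pr_Z_RD_pos[of z] by (simp add: field_simps)

lemma pr_taker:
  assumes [measurable]: "B \<in> sets borel"
  shows "pr M (\<lambda>w. Zv w = z' \<and> RDv w \<and> Uv w = taker z \<and> Yv w \<in> B)
    = pr M (\<lambda>w. Zv w = z' \<and> RDv w) * pr M (\<lambda>w. Uv w = taker z \<and> Y1v w \<in> B)"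
proof -
  have "AE w in M. Uv w = taker z \<and> Ypot z' w \<in> B \<longleftrightarrow> Uv w = taker z \<and> Y1v w \<in> B"
    using AE_exclusion by eventually_elim (auto simp: taker_def Ypot_def)
  then have "pr M (\<lambda>w. Uv w = taker z \<and> Ypot z' w \<in> B) = pr M (\<lambda>w. Uv w = taker z \<and> Y1v w \<in> B)"
    by (rule pr_cong_AE) measurable
  then show ?thesis
    using pr_Z_RD_potential[of "\<lambda>u d y. u = taker z \<and> y \<in> B" z'] by simp
qed

lemma taker_ratio_if_proportional:
  assumes proportional: "\<And>z'. pr M (\<lambda>w. Zv w = z' \<and> RDv w \<and> Uv w = taker z \<and> RYv w \<and> Yv w \<in> B) * e
      = c * pr M (\<lambda>w. Zv w = z' \<and> RDv w)"
    and le: "\<And>z'. pr M (\<lambda>w. Zv w = z' \<and> RDv w \<and> Uv w = taker z \<and> RYv w \<and> Yv w \<in> B) \<le> e"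
  shows "pr M (\<lambda>w. Zv w = z \<and> RDv w \<and> Uv w = taker z \<and> RYv w \<and> Yv w \<in> B) * pr M (\<lambda>w. Zv w = (\<not> z) \<and> RDv w)
    = pr M (\<lambda>w. Zv w = (\<not> z) \<and> RDv w \<and> Uv w = taker z \<and> RYv w \<and> Yv w \<in> B) * pr M (\<lambda>w. Zv w = z \<and> RDv w)"
  by (rule cross_mult_eq_if_proportional[OF proportional proportional])
    (use le[of z] le[of "\<not> z"] in \<open>auto intro!: antisym pr_nonneg\<close>)

lemma pr_complier_RY_eq_complier_obs:
  assumes [measurable]: "B \<in> sets borel"
    and taker_ratio:
      "pr M (\<lambda>w. Zv w = z \<and> RDv w \<and> Uv w = taker z \<and> RYv w \<and> Yv w \<in> B) * pr M (\<lambda>w. Zv w = (\<not> z) \<and> RDv w)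
        = pr M (\<lambda>w. Zv w = (\<not> z) \<and> RDv w \<and> Uv w = taker z \<and> RYv w \<and> Yv w \<in> B) * pr M (\<lambda>w. Zv w = z \<and> RDv w)"
  shows "pr M (\<lambda>w. Zv w = z \<and> RDv w \<and> Uv w = Complier \<and> RYv w \<and> Yv w \<in> B) = complier_obs M z B"
proof -
  have "pr M (\<lambda>w. Zv w = z \<and> RDv w \<and> Dv w = z \<and> RYv w \<and> Yv w \<in> B)
      = pr M (\<lambda>w. (Zv w = z \<and> RDv w \<and> Dv w = z \<and> RYv w \<and> Yv w \<in> B) \<and> Uv w = Complier)
      + pr M (\<lambda>w. (Zv w = z \<and> RDv w \<and> Dv w = z \<and> RYv w \<and> Yv w \<in> B) \<and> Uv w \<noteq> Complier)"
    by (rule pr_split) measurable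
  also have "\<dots> = pr M (\<lambda>w. Zv w = z \<and> RDv w \<and> Uv w = Complier \<and> RYv w \<and> Yv w \<in> B)
      + pr M (\<lambda>w. Zv w = z \<and> RDv w \<and> Uv w = taker z \<and> RYv w \<and> Yv w \<in> B)"
    by (intro arg_cong2[where f="(+)"] pr_cong) (auto simp: Uv_def Dv_def taker_def)
  finally have split: "pr M (\<lambda>w. Zv w = z \<and> RDv w \<and> Dv w = z \<and> RYv w \<and> Yv w \<in> B)
      = pr M (\<lambda>w. Zv w = z \<and> RDv w \<and> Uv w = Complier \<and> RYv w \<and> Yv w \<in> B)
      + pr M (\<lambda>w. Zv w = z \<and> RDv w \<and> Uv w = taker z \<and> RYv w \<and> Yv w \<in> B)" .
  have "AE w in M. (Zv w = (\<not> z) \<and> RDv w \<and> Dv w = z \<and> RYv w \<and> Yv w \<in> B)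
      \<longleftrightarrow> (Zv w = (\<not> z) \<and> RDv w \<and> Uv w = taker z \<and> RYv w \<and> Yv w \<in> B)"
    using AE_no_defier by eventually_elim (auto simp: Uv_def Dv_def taker_def)
  then have "pr M (\<lambda>w. Zv w = (\<not> z) \<and> RDv w \<and> Dv w = z \<and> RYv w \<and> Yv w \<in> B)
      = pr M (\<lambda>w. Zv w = (\<not> z) \<and> RDv w \<and> Uv w = taker z \<and> RYv w \<and> Yv w \<in> B)"
    by (rule pr_cong_AE) measurable
  with split taker_ratio pr_Z_RD_pos[of "\<not> z"] show ?thesis
    by (simp add: complier_obs_def field_simps)
qed

end

section \<open>Laws with the same observed-data distribution\<close>

locale obs_equivalent = M1: iv_2Z M1 + M2: iv_2Z M2 for M1 M2 +
  assumes obs_law_eq: "obs_law M1 = obs_law M2"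
begin

lemma pr_observable_eq:
  assumes "observable P"
  shows "pr M1 P = pr M2 P"
proof -
  obtain S where S: "S \<in> sets borel" and P: "\<And>w. P w \<longleftrightarrow> obs w \<in> S"
    using assms unfolding observable_def by blast
  have "pr M P = measure (obs_law M) S" if "iv M" for M
  proof -
    interpret iv M by fact
    show ?thesis
      using S by (simp add: obs_law_def measure_distr measurable_M_iff measurable_obs
          pr_eq_measure P space_eq_UNIV vimage_def)
  qed
  then show ?thesis
    using obs_law_eq M1.iv_axioms M2.iv_axioms by simp
qed

lemma pr_Z_RD_eq: "pr M1 (\<lambda>w. Zv w = z \<and> RDv w) = pr M2 (\<lambda>w. Zv w = z \<and> RDv w)"
  by (rule pr_observable_eq[OF observable_Z_RD])

lemma pr_complier_eq: "pr M1 (\<lambda>w. Uv w = Complier) = pr M2 (\<lambda>w. Uv w = Complier)"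
proof -
  have "pr M1 (Dpot z) = pr M2 (Dpot z)" for z
    using pr_Z_RD_eq[of z] pr_observable_eq[OF observable_Z_RD_D[of z True]]
    by (simp add: M1.pr_Dpot M2.pr_Dpot)
  from this[of True] this[of False] show ?thesis
    by (simp add: M1.pr_complier M2.pr_complier)
qed

lemma integral_eq_if_laws_eq:
  fixes f :: "unit_data \<Rightarrow> real"
  assumes f: "f \<in> borel_measurable borel"
    and laws_eq: "\<And>B. B \<in> sets borel \<Longrightarrow> pr M1 (\<lambda>w. f w \<in> B) = pr M2 (\<lambda>w. f w \<in> B)"
  shows "integral\<^sup>L M1 f = integral\<^sup>L M2 f"
proof -
  have "distr M1 borel f = distr M2 borel f"
  proof (rule measure_eqI)
    fix B
    assume "B \<in> sets (distr M1 borel f)"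
    then have "B \<in> sets borel"
      by simp
    then show "emeasure (distr M1 borel f) B = emeasure (distr M2 borel f) B"
      by (simp add: M1.emeasure_distr_eq_pr[OF f] M2.emeasure_distr_eq_pr[OF f] laws_eq)
  qed simp
  moreover have "f \<in> borel_measurable M1" "f \<in> borel_measurable M2"
    using f by (simp_all add: M1.measurable_M_iff M2.measurable_M_iff)
  ultimately show ?thesis
    using integral_distr[of f M1 borel "\<lambda>x. x"] integral_distr[of f M2 borel "\<lambda>x. x"] by simp
qed

lemma CACE_eq_if_arm_Y_laws_eq:
  assumes "\<And>z B. B \<in> sets borel \<Longrightarrow>
    pr M1 (\<lambda>w. Zv w = z \<and> RDv w \<and> Yv w \<in> B) = pr M2 (\<lambda>w. Zv w = z \<and> RDv w \<and> Yv w \<in> B)"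
  shows "CACE M1 = CACE M2"
proof -
  have "integral\<^sup>L M1 (Ypot z) = integral\<^sup>L M2 (Ypot z)" for z
  proof (rule integral_eq_if_laws_eq)
    fix B :: "real set"
    assume "B \<in> sets borel"
    then show "pr M1 (\<lambda>w. Ypot z w \<in> B) = pr M2 (\<lambda>w. Ypot z w \<in> B)"
      using assms[of B z] pr_Z_RD_eq[of z] by (simp add: M1.pr_Ypot M2.pr_Ypot)
  qed measurable
  from this[of True] this[of False] show ?thesis
    by (simp add: M1.CACE_eq_mean_diff M2.CACE_eq_mean_diff pr_complier_eq)
qed

lemma CACE_eq_if_arm_complier_Y_laws_eq:
  assumes "\<And>z B. B \<in> sets borel \<Longrightarrow>
    pr M1 (\<lambda>w. Zv w = z \<and> RDv w \<and> Uv w = Complier \<and> Yv w \<in> B)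
      = pr M2 (\<lambda>w. Zv w = z \<and> RDv w \<and> Uv w = Complier \<and> Yv w \<in> B)"
  shows "CACE M1 = CACE M2"
proof -
  have "integral\<^sup>L M1 (\<lambda>w. if Uv w = Complier then Ypot z w else 0)
      = integral\<^sup>L M2 (\<lambda>w. if Uv w = Complier then Ypot z w else 0)" for z
  proof (rule integral_eq_if_laws_eq)
    fix B :: "real set"
    assume "B \<in> sets borel"
    then show "pr M1 (\<lambda>w. (if Uv w = Complier then Ypot z w else 0) \<in> B)
        = pr M2 (\<lambda>w. (if Uv w = Complier then Ypot z w else 0) \<in> B)"
      using assms[of B z] pr_Z_RD_eq[of z] pr_complier_eq
      by (simp add: M1.pr_complier_Ypot_in M2.pr_complier_Ypot_in M1.pr_complier_Ypot M2.pr_complier_Ypot)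
  qed measurable
  from this[of True, unfolded Ypot_simps] this[of False, unfolded Ypot_simps] show ?thesis
    by (simp add: M1.CACE_eq_complier_mean_diff M2.CACE_eq_complier_mean_diff pr_complier_eq)
qed

lemma CACE_eq_if_binary_arm_eq:
  assumes "binary_Y M1" "binary_Y M2"
    and "\<And>z. pr M1 (\<lambda>w. Zv w = z \<and> RDv w \<and> Yv w = 1) = pr M2 (\<lambda>w. Zv w = z \<and> RDv w \<and> Yv w = 1)"
  shows "CACE M1 = CACE M2"
proof -
  have "integral\<^sup>L M1 (Ypot z) = integral\<^sup>L M2 (Ypot z)" for z
    using assms(3)[of z] M1.pr_Ypot[of "{1}" z] M2.pr_Ypot[of "{1}" z] pr_Z_RD_eq[of z]
    by (simp add: M1.integral_Ypot_binary[OF assms(1)] M2.integral_Ypot_binary[OF assms(2)])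
  from this[of True] this[of False] show ?thesis
    by (simp add: M1.CACE_eq_mean_diff M2.CACE_eq_mean_diff pr_complier_eq)
qed

lemma complier_obs_eq:
  assumes "B \<in> sets borel"
  shows "complier_obs M1 z B = complier_obs M2 z B"
  using pr_observable_eq[OF observable_Z_RD_D_RY_Y[OF assms, of z z]]
    pr_observable_eq[OF observable_Z_RD_D_RY_Y[OF assms, of "\<not> z" z]] pr_Z_RD_eq
  by (simp add: complier_obs_def)

lemma arm_cells_eq_if_RY_rescaled:
  fixes zx dx :: "bool \<Rightarrow> bool" and k l :: "real \<Rightarrow> real"
  assumes binary: "binary_Y M1" "binary_Y M2"
    and scale1: "\<And>x y. y \<in> {0, 1} \<Longrightarrow>
      pr M1 (\<lambda>w. Zv w = zx x \<and> RDv w \<and> Dv w = dx x \<and> RYv w \<and> Yv w \<in> {y})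
        = k y * pr M1 (\<lambda>w. Zv w = zx x \<and> RDv w \<and> Dv w = dx x \<and> Yv w = y)"
    and scale2: "\<And>x y. y \<in> {0, 1} \<Longrightarrow>
      pr M2 (\<lambda>w. Zv w = zx x \<and> RDv w \<and> Dv w = dx x \<and> RYv w \<and> Yv w \<in> {y})
        = l y * pr M2 (\<lambda>w. Zv w = zx x \<and> RDv w \<and> Dv w = dx x \<and> Yv w = y)"
    and l: "l 0 \<noteq> 0" "l 1 \<noteq> 0"
    and det: "pr M1 (\<lambda>w. Zv w = zx False \<and> RDv w \<and> Dv w = dx False \<and> Yv w = 0)
        * pr M1 (\<lambda>w. Zv w = zx True \<and> RDv w \<and> Dv w = dx True \<and> Yv w = 1)
      \<noteq> pr M1 (\<lambda>w. Zv w = zx False \<and> RDv w \<and> Dv w = dx False \<and> Yv w = 1)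
        * pr M1 (\<lambda>w. Zv w = zx True \<and> RDv w \<and> Dv w = dx True \<and> Yv w = 0)"
  shows "pr M1 (\<lambda>w. Zv w = zx x \<and> RDv w \<and> Dv w = dx x \<and> Yv w = 1)
    = pr M2 (\<lambda>w. Zv w = zx x \<and> RDv w \<and> Dv w = dx x \<and> Yv w = 1)"
proof -
  define p q where "p x y = pr M1 (\<lambda>w. Zv w = zx x \<and> RDv w \<and> Dv w = dx x \<and> Yv w = y)"
    and "q x y = pr M2 (\<lambda>w. Zv w = zx x \<and> RDv w \<and> Dv w = dx x \<and> Yv w = y)" for x y
  have "q x 1 = p x 1"
  proof (rule rescaled_table_eq[where p=p and q=q and k=k and l=l and x=x and y=1])
    fix x and y :: real
    assume "y \<in> {0, 1}"
    then show "k y * p x y = l y * q x y"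
      using scale1[of y x] scale2[of y x]
          pr_observable_eq[OF observable_Z_RD_D_RY_Y[of "{y}" "zx x" "dx x"]]
      by (simp add: p_def q_def)
  next
    fix x
    have "p x 0 + p x 1 = pr M1 (\<lambda>w. Zv w = zx x \<and> RDv w \<and> Dv w = dx x)"
      using M1.pr_split_binary[OF M1.AE_Yv_binary[OF binary(1)], of "\<lambda>w. Zv w = zx x \<and> RDv w \<and> Dv w = dx x"]
      by (simp add: p_def)
    moreover have "q x 0 + q x 1 = pr M2 (\<lambda>w. Zv w = zx x \<and> RDv w \<and> Dv w = dx x)"
      using M2.pr_split_binary[OF M2.AE_Yv_binary[OF binary(2)], of "\<lambda>w. Zv w = zx x \<and> RDv w \<and> Dv w = dx x"]
      by (simp add: q_def)
    ultimately show "p x 0 + p x 1 = q x 0 + q x 1"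
      using pr_observable_eq[OF observable_Z_RD_D[of "zx x" "dx x"]] by simp
  qed (use l det in \<open>simp_all add: p_def\<close>)
  then show ?thesis
    by (simp add: p_def q_def)
qed

end

lemma CACE_identifiableI:
  assumes "\<And>M. P M \<Longrightarrow> iv_model M \<and> RD_2Z M"
    and "\<And>M1 M2. P M1 \<Longrightarrow> P M2 \<Longrightarrow> obs_equivalent M1 M2 \<Longrightarrow> CACE M1 = CACE M2"
  shows "CACE_identifiable P"
proof -
  have "CACE M1 = CACE M2" if "P M1" "P M2" "obs_law M1 = obs_law M2" for M1 M2
  proof (rule assms(2)[OF that(1,2)])
    show "obs_equivalent M1 M2"
      by unfold_locales (use assms(1) that in auto)
  qed
  then show ?thesis
    unfolding CACE_identifiable_def by blast
qed

section \<open>The five response mechanisms of the outcome\<close>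

locale ZD_missingness = iv_2Z +
  assumes RY_cindep: "cindep M RYv (\<lambda>w. (Uv w, Yv w)) (\<lambda>w. (Zv w, Dv w, RDv w))"
    and RY_pos: "\<And>z d. 0 < cpr M RYv (\<lambda>w. Zv w = z \<and> Dv w = d \<and> RDv w)"
begin

lemma pr_Z_RD_D_Y:
  assumes [measurable]: "B \<in> sets borel"
  shows "pr M (\<lambda>w. Zv w = z \<and> RDv w \<and> Dv w = d \<and> Yv w \<in> B)
    = pr M (\<lambda>w. Zv w = z \<and> RDv w \<and> Dv w = d \<and> RYv w \<and> Yv w \<in> B)
      * pr M (\<lambda>w. Zv w = z \<and> RDv w \<and> Dv w = d) / pr M (\<lambda>w. Zv w = z \<and> RDv w \<and> Dv w = d \<and> RYv w)"
proof -
  have "pr M (\<lambda>w. RYv w \<and> Yv w \<in> B \<and> Zv w = z \<and> Dv w = d \<and> RDv w) * pr M (\<lambda>w. Zv w = z \<and> Dv w = d \<and> RDv w)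
      = pr M (\<lambda>w. RYv w \<and> Zv w = z \<and> Dv w = d \<and> RDv w) * pr M (\<lambda>w. Yv w \<in> B \<and> Zv w = z \<and> Dv w = d \<and> RDv w)"
    using cindep_pr_mult[OF RY_cindep measurable_RYv, of "UNIV \<times> B" "(z, d, True)"] by simp
  moreover have "0 < pr M (\<lambda>w. RYv w \<and> Zv w = z \<and> Dv w = d \<and> RDv w)"
    using cpr_posD(1)[OF RY_pos] .
  ultimately show ?thesis
    by (simp add: conj_ac field_simps)
qed

end

lemma ZD_missingnessI: "model_1ZD M \<Longrightarrow> ZD_missingness M"
  by (simp add: model_1ZD_def ZD_missingness_def ZD_missingness_axioms_def iv_2Z_def iv_2Z_axioms_def iv_def)

lemma (in obs_equivalent) CACE_eq_1ZD:
  assumes "ZD_missingness M1" "ZD_missingness M2"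
  shows "CACE M1 = CACE M2"
proof (rule CACE_eq_if_arm_Y_laws_eq)
  interpret M1: ZD_missingness M1 by fact
  interpret M2: ZD_missingness M2 by fact
  fix z and B :: "real set"
  assume [measurable]: "B \<in> sets borel"
  have "pr M1 (\<lambda>w. Zv w = z \<and> RDv w \<and> Dv w = d \<and> Yv w \<in> B)
      = pr M2 (\<lambda>w. Zv w = z \<and> RDv w \<and> Dv w = d \<and> Yv w \<in> B)" for d
    by (simp add: M1.pr_Z_RD_D_Y M2.pr_Z_RD_D_Y pr_observable_eq observable_Z_RD_D
        observable_Z_RD_D_RY observable_Z_RD_D_RY_Y)
  from this[of True] this[of False]
  show "pr M1 (\<lambda>w. Zv w = z \<and> RDv w \<and> Yv w \<in> B) = pr M2 (\<lambda>w. Zv w = z \<and> RDv w \<and> Yv w \<in> B)"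
    by (simp add: M1.pr_Z_RD_Y_split_D M2.pr_Z_RD_Y_split_D)
qed

lemma CACE_identifiable_1ZD: "CACE_identifiable model_1ZD"
proof (rule CACE_identifiableI)
  show "iv_model M \<and> RD_2Z M" if "model_1ZD M" for M
    using that by (simp add: model_1ZD_def)
  show "CACE M1 = CACE M2" if "model_1ZD M1" "model_1ZD M2" "obs_equivalent M1 M2" for M1 M2
    using that by (blast intro: obs_equivalent.CACE_eq_1ZD ZD_missingnessI)
qed

locale UD_missingness = iv_2Z +
  assumes RY_cindep: "cindep M RYv (\<lambda>w. (Zv w, Yv w)) (\<lambda>w. (Uv w, Dv w, RDv w))"
    and RY_pos: "\<And>d. 0 < cpr M RYv (\<lambda>w. Uv w = Complier \<and> Dv w = d \<and> RDv w)"
begin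

lemma pr_RY_Z_Y_given_U_D:
  assumes [measurable]: "B \<in> sets borel"
  shows "pr M (\<lambda>w. RYv w \<and> Zv w = z' \<and> Yv w \<in> B \<and> Uv w = u \<and> Dv w = d \<and> RDv w)
      * pr M (\<lambda>w. Uv w = u \<and> Dv w = d \<and> RDv w)
    = pr M (\<lambda>w. RYv w \<and> Uv w = u \<and> Dv w = d \<and> RDv w)
      * pr M (\<lambda>w. Zv w = z' \<and> Yv w \<in> B \<and> Uv w = u \<and> Dv w = d \<and> RDv w)"
  using cindep_pr_mult[OF RY_cindep measurable_RYv, of "{z'} \<times> B" "(u, d, True)"] by simp

lemma taker_ratio:
  assumes [measurable]: "B \<in> sets borel"
  shows "pr M (\<lambda>w. Zv w = z \<and> RDv w \<and> Uv w = taker z \<and> RYv w \<and> Yv w \<in> B) * pr M (\<lambda>w. Zv w = (\<not> z) \<and> RDv w)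
    = pr M (\<lambda>w. Zv w = (\<not> z) \<and> RDv w \<and> Uv w = taker z \<and> RYv w \<and> Yv w \<in> B) * pr M (\<lambda>w. Zv w = z \<and> RDv w)"
proof (rule taker_ratio_if_proportional)
  fix z'
  have RY_event: "pr M (\<lambda>w. RYv w \<and> Zv w = z' \<and> Yv w \<in> B \<and> Uv w = taker z \<and> Dv w = z \<and> RDv w)
      = pr M (\<lambda>w. Zv w = z' \<and> RDv w \<and> Uv w = taker z \<and> RYv w \<and> Yv w \<in> B)"
    by (rule pr_cong) (auto dest: Dv_taker)
  have Y_event: "pr M (\<lambda>w. Zv w = z' \<and> Yv w \<in> B \<and> Uv w = taker z \<and> Dv w = z \<and> RDv w)
      = pr M (\<lambda>w. Zv w = z' \<and> RDv w \<and> Uv w = taker z \<and> Yv w \<in> B)"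
    by (rule pr_cong) (auto dest: Dv_taker)
  show "pr M (\<lambda>w. Zv w = z' \<and> RDv w \<and> Uv w = taker z \<and> RYv w \<and> Yv w \<in> B)
      * pr M (\<lambda>w. Uv w = taker z \<and> Dv w = z \<and> RDv w)
    = (pr M (\<lambda>w. RYv w \<and> Uv w = taker z \<and> Dv w = z \<and> RDv w) * pr M (\<lambda>w. Uv w = taker z \<and> Y1v w \<in> B))
      * pr M (\<lambda>w. Zv w = z' \<and> RDv w)"
    using pr_RY_Z_Y_given_U_D[OF assms, of z' "taker z" z, unfolded RY_event Y_event pr_taker[OF assms]]
    by (simp only: mult_ac)
  show "pr M (\<lambda>w. Zv w = z' \<and> RDv w \<and> Uv w = taker z \<and> RYv w \<and> Yv w \<in> B)
      \<le> pr M (\<lambda>w. Uv w = taker z \<and> Dv w = z \<and> RDv w)"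
    by (rule pr_mono) (measurable, blast dest: Dv_taker)
qed

lemma pr_complier_Y:
  assumes [measurable]: "B \<in> sets borel"
  shows "pr M (\<lambda>w. Zv w = z \<and> RDv w \<and> Uv w = Complier \<and> Yv w \<in> B)
    = complier_obs M z B * pr M (\<lambda>w. Zv w = z \<and> RDv w) * pr M (\<lambda>w. Uv w = Complier) / complier_obs M z UNIV"
proof -
  have complier_obs: "pr M (\<lambda>w. Zv w = z \<and> RDv w \<and> Uv w = Complier \<and> RYv w \<and> Yv w \<in> A) = complier_obs M z A"
    if [measurable]: "A \<in> sets borel" for A
    by (rule pr_complier_RY_eq_complier_obs[OF that taker_ratio[OF that]])
  have "pr M (\<lambda>w. Zv w = z \<and> RDv w \<and> Uv w = Complier)
      = pr M (\<lambda>w. Zv w = z \<and> RDv w) * pr M (\<lambda>w. Uv w = Complier)"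
    using pr_Z_RD_potential[of "\<lambda>u d y. u = Complier" z] by simp
  moreover have "0 < pr M (\<lambda>w. RYv w \<and> Uv w = Complier \<and> Dv w = z \<and> RDv w)"
    using cpr_posD(1)[OF RY_pos] .
  moreover note complier_obs[OF assms] complier_obs[of UNIV, simplified]
  ultimately show ?thesis
    using pr_RY_Z_Y_given_U_D[of B z Complier z] pr_RY_Z_Y_given_U_D[of UNIV z Complier z]
    by (simp add: conj_ac Dv_complier field_simps cong: conj_cong)
qed

end

lemma UD_missingnessI: "model_1UD M \<Longrightarrow> UD_missingness M"
  by (simp add: model_1UD_def UD_missingness_def UD_missingness_axioms_def iv_2Z_def iv_2Z_axioms_def iv_def)

lemma (in obs_equivalent) CACE_eq_1UD:
  assumes "UD_missingness M1" "UD_missingness M2"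
  shows "CACE M1 = CACE M2"
proof (rule CACE_eq_if_arm_complier_Y_laws_eq)
  interpret M1: UD_missingness M1 by fact
  interpret M2: UD_missingness M2 by fact
  fix z and B :: "real set"
  assume "B \<in> sets borel"
  then show "pr M1 (\<lambda>w. Zv w = z \<and> RDv w \<and> Uv w = Complier \<and> Yv w \<in> B)
      = pr M2 (\<lambda>w. Zv w = z \<and> RDv w \<and> Uv w = Complier \<and> Yv w \<in> B)"
    by (simp add: M1.pr_complier_Y M2.pr_complier_Y complier_obs_eq pr_Z_RD_eq pr_complier_eq)
qed

lemma CACE_identifiable_1UD: "CACE_identifiable model_1UD"
proof (rule CACE_identifiableI)
  show "iv_model M \<and> RD_2Z M" if "model_1UD M" for M
    using that by (simp add: model_1UD_def)
  show "CACE M1 = CACE M2" if "model_1UD M1" "model_1UD M2" "obs_equivalent M1 M2" for M1 M2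
    using that by (blast intro: obs_equivalent.CACE_eq_1UD UD_missingnessI)
qed

locale UY_missingness = iv_2Z +
  assumes binary: "binary_Y M"
    and RY_cindep: "cindep M RYv (\<lambda>w. (Zv w, Dv w)) (\<lambda>w. (Uv w, Yv w, RDv w))"
    and RY_pos: "\<And>y. y \<in> {0, 1} \<Longrightarrow> 0 < cpr M RYv (\<lambda>w. Uv w = Complier \<and> Yv w = y \<and> RDv w)"
begin

lemma pr_RY_Z_given_U_Y:
  "pr M (\<lambda>w. RYv w \<and> Zv w = z' \<and> Uv w = u \<and> Yv w = y \<and> RDv w) * pr M (\<lambda>w. Uv w = u \<and> Yv w = y \<and> RDv w)
    = pr M (\<lambda>w. RYv w \<and> Uv w = u \<and> Yv w = y \<and> RDv w) * pr M (\<lambda>w. Zv w = z' \<and> Uv w = u \<and> Yv w = y \<and> RDv w)"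
  using cindep_pr_mult[OF RY_cindep measurable_RYv, of "{z'} \<times> UNIV" "(u, y, True)"] by simp

lemma taker_ratio:
  "pr M (\<lambda>w. Zv w = z \<and> RDv w \<and> Uv w = taker z \<and> RYv w \<and> Yv w \<in> {y}) * pr M (\<lambda>w. Zv w = (\<not> z) \<and> RDv w)
    = pr M (\<lambda>w. Zv w = (\<not> z) \<and> RDv w \<and> Uv w = taker z \<and> RYv w \<and> Yv w \<in> {y}) * pr M (\<lambda>w. Zv w = z \<and> RDv w)"
proof (rule taker_ratio_if_proportional)
  fix z'
  have y_borel: "{y} \<in> sets borel"
    by simp
  have RY_event: "pr M (\<lambda>w. RYv w \<and> Zv w = z' \<and> Uv w = taker z \<and> Yv w = y \<and> RDv w)
      = pr M (\<lambda>w. Zv w = z' \<and> RDv w \<and> Uv w = taker z \<and> RYv w \<and> Yv w \<in> {y})"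
    by (rule pr_cong) auto
  have Y_event: "pr M (\<lambda>w. Zv w = z' \<and> Uv w = taker z \<and> Yv w = y \<and> RDv w)
      = pr M (\<lambda>w. Zv w = z' \<and> RDv w \<and> Uv w = taker z \<and> Yv w \<in> {y})"
    by (rule pr_cong) auto
  show "pr M (\<lambda>w. Zv w = z' \<and> RDv w \<and> Uv w = taker z \<and> RYv w \<and> Yv w \<in> {y})
      * pr M (\<lambda>w. Uv w = taker z \<and> Yv w = y \<and> RDv w)
    = (pr M (\<lambda>w. RYv w \<and> Uv w = taker z \<and> Yv w = y \<and> RDv w) * pr M (\<lambda>w. Uv w = taker z \<and> Y1v w \<in> {y}))
      * pr M (\<lambda>w. Zv w = z' \<and> RDv w)"
    using pr_RY_Z_given_U_Y[of z' "taker z" y, unfolded RY_event Y_event pr_taker[OF y_borel]]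
    by (simp only: mult_ac)
  show "pr M (\<lambda>w. Zv w = z' \<and> RDv w \<and> Uv w = taker z \<and> RYv w \<and> Yv w \<in> {y})
      \<le> pr M (\<lambda>w. Uv w = taker z \<and> Yv w = y \<and> RDv w)"
    by (rule pr_mono) auto
qed

lemma complier_obs_singleton:
  assumes "y \<in> {0, 1}"
  shows "complier_obs M z {y} = pr M (\<lambda>w. Zv w = z \<and> RDv w)
    * cpr M RYv (\<lambda>w. Uv w = Complier \<and> Yv w = y \<and> RDv w) * pr M (\<lambda>w. Uv w = Complier \<and> Ypot z w = y)"
proof -
  have "pr M (\<lambda>w. Zv w = z \<and> RDv w \<and> Uv w = Complier \<and> RYv w \<and> Yv w \<in> {y}) = complier_obs M z {y}"
    by (rule pr_complier_RY_eq_complier_obs[OF _ taker_ratio]) simp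
  moreover have "pr M (\<lambda>w. Zv w = z \<and> RDv w \<and> Uv w = Complier \<and> Yv w = y)
      = pr M (\<lambda>w. Zv w = z \<and> RDv w) * pr M (\<lambda>w. Uv w = Complier \<and> Ypot z w = y)"
    using pr_Z_RD_potential[of "\<lambda>u d y'. u = Complier \<and> y' = y" z] by simp
  moreover have "0 < pr M (\<lambda>w. Uv w = Complier \<and> Yv w = y \<and> RDv w)"
    using cpr_posD(2)[OF RY_pos[OF assms]] .
  ultimately show ?thesis
    using pr_RY_Z_given_U_Y[of z Complier y] by (simp add: cpr_def conj_ac field_simps)
qed

end

lemma UY_missingnessI: "model_1UY M \<Longrightarrow> UY_missingness M"
  by (simp add: model_1UY_def UY_missingness_def UY_missingness_axioms_def iv_2Z_def iv_2Z_axioms_def iv_def)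

lemma (in obs_equivalent) CACE_eq_1UY:
  assumes "UY_missingness M1" "UY_missingness M2"
  shows "CACE M1 = CACE M2"
proof -
  interpret M1: UY_missingness M1 by fact
  interpret M2: UY_missingness M2 by fact
  define p q where "p z y = pr M1 (\<lambda>w. Uv w = Complier \<and> Ypot z w = y)"
    and "q z y = pr M2 (\<lambda>w. Uv w = Complier \<and> Ypot z w = y)" for z y
  define k l where "k y = cpr M1 RYv (\<lambda>w. Uv w = Complier \<and> Yv w = y \<and> RDv w)"
    and "l y = cpr M2 RYv (\<lambda>w. Uv w = Complier \<and> Yv w = y \<and> RDv w)" for y
  have "p True 1 - p False 1 = q True 1 - q False 1"
  proof (rule rescaled_table_diff_eq)
    fix z and y :: real
    assume y: "y \<in> {0, 1}"
    have "pr M1 (\<lambda>w. Zv w = z \<and> RDv w) * (k y * p z y) = complier_obs M1 z {y}"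
      using M1.complier_obs_singleton[OF y, of z] by (simp add: p_def k_def mult_ac)
    moreover have "pr M2 (\<lambda>w. Zv w = z \<and> RDv w) * (l y * q z y) = complier_obs M2 z {y}"
      using M2.complier_obs_singleton[OF y, of z] by (simp add: q_def l_def mult_ac)
    ultimately have "pr M1 (\<lambda>w. Zv w = z \<and> RDv w) * (k y * p z y)
        = pr M1 (\<lambda>w. Zv w = z \<and> RDv w) * (l y * q z y)"
      using complier_obs_eq[of "{y}" z] pr_Z_RD_eq[of z] by simp
    then show "k y * p z y = l y * q z y"
      using M1.pr_Z_RD_pos[of z] by simp
  next
    show "l 0 \<noteq> 0" "l 1 \<noteq> 0"
      using M2.RY_pos[of 0] M2.RY_pos[of 1] by (auto simp: l_def)
  next
    fix z
    show "p z 0 + p z 1 = pr M1 (\<lambda>w. Uv w = Complier)"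
      using M1.pr_split_binary[OF M1.AE_Ypot_binary[OF M1.binary, of z], of "\<lambda>w. Uv w = Complier"]
      by (simp add: p_def)
    show "q z 0 + q z 1 = pr M1 (\<lambda>w. Uv w = Complier)"
      using M2.pr_split_binary[OF M2.AE_Ypot_binary[OF M2.binary, of z], of "\<lambda>w. Uv w = Complier"]
      by (simp add: q_def pr_complier_eq)
  qed (rule M1.pr_complier_neq_0)
  then show ?thesis
    by (simp add: p_def q_def M1.CACE_eq_complier_pr_diff[OF M1.binary]
        M2.CACE_eq_complier_pr_diff[OF M2.binary] pr_complier_eq)
qed

lemma CACE_identifiable_1UY: "CACE_identifiable model_1UY"
proof (rule CACE_identifiableI)
  show "iv_model M \<and> RD_2Z M" if "model_1UY M" for M
    using that by (simp add: model_1UY_def)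
  show "CACE M1 = CACE M2" if "model_1UY M1" "model_1UY M2" "obs_equivalent M1 M2" for M1 M2
    using that by (blast intro: obs_equivalent.CACE_eq_1UY UY_missingnessI)
qed

locale DY_missingness = iv_2Z +
  assumes binary: "binary_Y M"
    and RY_cindep: "cindep M RYv (\<lambda>w. (Zv w, Uv w)) (\<lambda>w. (Dv w, Yv w, RDv w))"
    and RY_pos: "\<And>d y. y \<in> {0, 1} \<Longrightarrow> 0 < cpr M RYv (\<lambda>w. Dv w = d \<and> Yv w = y \<and> RDv w)"
    and Y_Z_dependent: "\<And>d. \<not> cindep_on M Yv Zv (\<lambda>w. Dv w = d \<and> RDv w)"
begin

lemma pr_obs_cell:
  assumes "y \<in> {0, 1}"
  shows "pr M (\<lambda>w. Zv w = z \<and> RDv w \<and> Dv w = d \<and> RYv w \<and> Yv w \<in> {y})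
    = cpr M RYv (\<lambda>w. Dv w = d \<and> Yv w = y \<and> RDv w) * pr M (\<lambda>w. Zv w = z \<and> RDv w \<and> Dv w = d \<and> Yv w = y)"
proof -
  have "pr M (\<lambda>w. RYv w \<and> Zv w = z \<and> Dv w = d \<and> Yv w = y \<and> RDv w) * pr M (\<lambda>w. Dv w = d \<and> Yv w = y \<and> RDv w)
      = pr M (\<lambda>w. RYv w \<and> Dv w = d \<and> Yv w = y \<and> RDv w) * pr M (\<lambda>w. Zv w = z \<and> Dv w = d \<and> Yv w = y \<and> RDv w)"
    using cindep_pr_mult[OF RY_cindep measurable_RYv, of "{z} \<times> UNIV" "(d, y, True)"] by simp
  moreover have "0 < pr M (\<lambda>w. Dv w = d \<and> Yv w = y \<and> RDv w)"
    using cpr_posD(2)[OF RY_pos[OF assms]] .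
  ultimately show ?thesis
    by (simp add: cpr_def conj_ac field_simps)
qed

lemma cells_det_neq_0:
  "pr M (\<lambda>w. Zv w = False \<and> RDv w \<and> Dv w = d \<and> Yv w = 0)
      * pr M (\<lambda>w. Zv w = True \<and> RDv w \<and> Dv w = d \<and> Yv w = 1)
    \<noteq> pr M (\<lambda>w. Zv w = False \<and> RDv w \<and> Dv w = d \<and> Yv w = 1)
        * pr M (\<lambda>w. Zv w = True \<and> RDv w \<and> Dv w = d \<and> Yv w = 0)"
proof
  assume det: "pr M (\<lambda>w. Zv w = False \<and> RDv w \<and> Dv w = d \<and> Yv w = 0)
      * pr M (\<lambda>w. Zv w = True \<and> RDv w \<and> Dv w = d \<and> Yv w = 1)
    = pr M (\<lambda>w. Zv w = False \<and> RDv w \<and> Dv w = d \<and> Yv w = 1)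
        * pr M (\<lambda>w. Zv w = True \<and> RDv w \<and> Dv w = d \<and> Yv w = 0)"
  have "cindep_on M Yv Zv (\<lambda>w. Dv w = d \<and> RDv w)"
    by (rule cindep_on_Yv_if_rank_one[OF AE_Yv_binary[OF binary]])
        (use det in \<open>simp_all add: conj_ac mult.commute\<close>)
  with Y_Z_dependent show False
    by blast
qed

end

lemma DY_missingnessI: "model_1DY M \<Longrightarrow> DY_missingness M"
  by (simp add: model_1DY_def DY_missingness_def DY_missingness_axioms_def iv_2Z_def iv_2Z_axioms_def iv_def)

lemma (in obs_equivalent) CACE_eq_1DY:
  assumes "DY_missingness M1" "DY_missingness M2"
  shows "CACE M1 = CACE M2"
proof -
  interpret M1: DY_missingness M1 by fact
  interpret M2: DY_missingness M2 by fact
  have cells_eq: "pr M1 (\<lambda>w. Zv w = z \<and> RDv w \<and> Dv w = d \<and> Yv w = 1)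
      = pr M2 (\<lambda>w. Zv w = z \<and> RDv w \<and> Dv w = d \<and> Yv w = 1)" for z d
    using arm_cells_eq_if_RY_rescaled[where zx="\<lambda>x. x" and dx="\<lambda>_. d"
        and k="\<lambda>y. cpr M1 RYv (\<lambda>w. Dv w = d \<and> Yv w = y \<and> RDv w)"
        and l="\<lambda>y. cpr M2 RYv (\<lambda>w. Dv w = d \<and> Yv w = y \<and> RDv w)"]
      M1.binary M2.binary M1.pr_obs_cell M2.pr_obs_cell M1.cells_det_neq_0 M2.RY_pos[of 0 d]
          M2.RY_pos[of 1 d]
    by simp
  show ?thesis
  proof (rule CACE_eq_if_binary_arm_eq[OF M1.binary M2.binary])
    fix z
    show "pr M1 (\<lambda>w. Zv w = z \<and> RDv w \<and> Yv w = 1) = pr M2 (\<lambda>w. Zv w = z \<and> RDv w \<and> Yv w = 1)"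
      using M1.pr_Z_RD_Y_split_D[of "{1}" z]
          M2.pr_Z_RD_Y_split_D[of "{1}" z] cells_eq[of z True] cells_eq[of z False]
      by simp
  qed
qed

lemma CACE_identifiable_1DY: "CACE_identifiable model_1DY"
proof (rule CACE_identifiableI)
  show "iv_model M \<and> RD_2Z M" if "model_1DY M" for M
    using that by (simp add: model_1DY_def)
  show "CACE M1 = CACE M2" if "model_1DY M1" "model_1DY M2" "obs_equivalent M1 M2" for M1 M2
    using that by (blast intro: obs_equivalent.CACE_eq_1DY DY_missingnessI)
qed

locale ZY_missingness = iv_2Z +
  assumes binary: "binary_Y M"
    and RY_cindep: "cindep M RYv (\<lambda>w. (Uv w, Dv w)) (\<lambda>w. (Zv w, Yv w, RDv w))"
    and RY_pos: "\<And>z y. y \<in> {0, 1} \<Longrightarrow> 0 < cpr M RYv (\<lambda>w. Zv w = z \<and> Yv w = y \<and> RDv w)"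
    and Y_D_dependent: "\<And>z. \<not> cindep_on M Yv Dv (\<lambda>w. Zv w = z)"
begin

lemma pr_obs_cell:
  assumes "y \<in> {0, 1}"
  shows "pr M (\<lambda>w. Zv w = z \<and> RDv w \<and> Dv w = d \<and> RYv w \<and> Yv w \<in> {y})
    = cpr M RYv (\<lambda>w. Zv w = z \<and> Yv w = y \<and> RDv w) * pr M (\<lambda>w. Zv w = z \<and> RDv w \<and> Dv w = d \<and> Yv w = y)"
proof -
  have "pr M (\<lambda>w. RYv w \<and> Dv w = d \<and> Zv w = z \<and> Yv w = y \<and> RDv w) * pr M (\<lambda>w. Zv w = z \<and> Yv w = y \<and> RDv w)
      = pr M (\<lambda>w. RYv w \<and> Zv w = z \<and> Yv w = y \<and> RDv w) * pr M (\<lambda>w. Dv w = d \<and> Zv w = z \<and> Yv w = y \<and> RDv w)"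
    using cindep_pr_mult[OF RY_cindep measurable_RYv, of "UNIV \<times> {d}" "(z, y, True)"] by simp
  moreover have "0 < pr M (\<lambda>w. Zv w = z \<and> Yv w = y \<and> RDv w)"
    using cpr_posD(2)[OF RY_pos[OF assms]] .
  ultimately show ?thesis
    by (simp add: cpr_def conj_ac field_simps)
qed

lemma cells_det_neq_0:
  "pr M (\<lambda>w. Zv w = z \<and> RDv w \<and> Dv w = False \<and> Yv w = 0)
      * pr M (\<lambda>w. Zv w = z \<and> RDv w \<and> Dv w = True \<and> Yv w = 1)
    \<noteq> pr M (\<lambda>w. Zv w = z \<and> RDv w \<and> Dv w = False \<and> Yv w = 1)
        * pr M (\<lambda>w. Zv w = z \<and> RDv w \<and> Dv w = True \<and> Yv w = 0)"
proof
  define c where "c = pr M (\<lambda>w. Zv w = z \<and> RDv w) / pr M (\<lambda>w. Zv w = z)"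
  have "c \<noteq> 0"
    using pr_Z_RD_pos[of z] pr_Z_pos[of z] by (simp add: c_def)
  have cell: "pr M (\<lambda>w. Zv w = z \<and> RDv w \<and> Dv w = d \<and> Yv w = y)
      = c * pr M (\<lambda>w. Zv w = z \<and> Dv w = d \<and> Yv w = y)" for d y
  proof -
    have "pr M (\<lambda>w. RDv w \<and> Dv w = d \<and> Yv w = y \<and> Zv w = z) * pr M (\<lambda>w. Zv w = z)
        = pr M (\<lambda>w. RDv w \<and> Zv w = z) * pr M (\<lambda>w. Dv w = d \<and> Yv w = y \<and> Zv w = z)"
      using cindep_pr_mult[OF RD_cindep measurable_RDv, of "UNIV \<times> {d} \<times> {y}" z] by simp
    then show ?thesis
      using pr_Z_pos[of z] by (simp add: c_def conj_ac field_simps)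
  qed
  assume "pr M (\<lambda>w. Zv w = z \<and> RDv w \<and> Dv w = False \<and> Yv w = 0)
      * pr M (\<lambda>w. Zv w = z \<and> RDv w \<and> Dv w = True \<and> Yv w = 1)
    = pr M (\<lambda>w. Zv w = z \<and> RDv w \<and> Dv w = False \<and> Yv w = 1)
        * pr M (\<lambda>w. Zv w = z \<and> RDv w \<and> Dv w = True \<and> Yv w = 0)"
  then have "(c * c) * (pr M (\<lambda>w. Zv w = z \<and> Dv w = False \<and> Yv w = 0)
      * pr M (\<lambda>w. Zv w = z \<and> Dv w = True \<and> Yv w = 1))
    = (c * c) * (pr M (\<lambda>w. Zv w = z \<and> Dv w = False \<and> Yv w = 1)
        * pr M (\<lambda>w. Zv w = z \<and> Dv w = True \<and> Yv w = 0))"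
    unfolding cell by (simp only: mult_ac)
  with \<open>c \<noteq> 0\<close> have det: "pr M (\<lambda>w. Zv w = z \<and> Dv w = False \<and> Yv w = 0)
      * pr M (\<lambda>w. Zv w = z \<and> Dv w = True \<and> Yv w = 1)
    = pr M (\<lambda>w. Zv w = z \<and> Dv w = False \<and> Yv w = 1) * pr M (\<lambda>w. Zv w = z \<and> Dv w = True \<and> Yv w = 0)"
    by simp
  have "cindep_on M Yv Dv (\<lambda>w. Zv w = z)"
    by (rule cindep_on_Yv_if_rank_one[OF AE_Yv_binary[OF binary]]) (use det in \<open>simp_all add: mult.commute\<close>)
  with Y_D_dependent show False
    by blast
qed

end

lemma ZY_missingnessI: "model_1ZY M \<Longrightarrow> ZY_missingness M"
  by (simp add: model_1ZY_def ZY_missingness_def ZY_missingness_axioms_def iv_2Z_def iv_2Z_axioms_def iv_def)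

lemma (in obs_equivalent) CACE_eq_1ZY:
  assumes "ZY_missingness M1" "ZY_missingness M2"
  shows "CACE M1 = CACE M2"
proof -
  interpret M1: ZY_missingness M1 by fact
  interpret M2: ZY_missingness M2 by fact
  have cells_eq: "pr M1 (\<lambda>w. Zv w = z \<and> RDv w \<and> Dv w = d \<and> Yv w = 1)
      = pr M2 (\<lambda>w. Zv w = z \<and> RDv w \<and> Dv w = d \<and> Yv w = 1)" for z d
    using arm_cells_eq_if_RY_rescaled[where zx="\<lambda>_. z" and dx="\<lambda>x. x"
        and k="\<lambda>y. cpr M1 RYv (\<lambda>w. Zv w = z \<and> Yv w = y \<and> RDv w)"
        and l="\<lambda>y. cpr M2 RYv (\<lambda>w. Zv w = z \<and> Yv w = y \<and> RDv w)"]
      M1.binary M2.binary M1.pr_obs_cell M2.pr_obs_cell M1.cells_det_neq_0 M2.RY_pos[of 0 z]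
          M2.RY_pos[of 1 z]
    by simp
  show ?thesis
  proof (rule CACE_eq_if_binary_arm_eq[OF M1.binary M2.binary])
    fix z
    show "pr M1 (\<lambda>w. Zv w = z \<and> RDv w \<and> Yv w = 1) = pr M2 (\<lambda>w. Zv w = z \<and> RDv w \<and> Yv w = 1)"
      using M1.pr_Z_RD_Y_split_D[of "{1}" z]
          M2.pr_Z_RD_Y_split_D[of "{1}" z] cells_eq[of z True] cells_eq[of z False]
      by simp
  qed
qed

lemma CACE_identifiable_1ZY: "CACE_identifiable model_1ZY"
proof (rule CACE_identifiableI)
  show "iv_model M \<and> RD_2Z M" if "model_1ZY M" for M
    using that by (simp add: model_1ZY_def)
  show "CACE M1 = CACE M2" if "model_1ZY M1" "model_1ZY M2" "obs_equivalent M1 M2" for M1 M2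
    using that by (blast intro: obs_equivalent.CACE_eq_1ZY ZY_missingnessI)
qed

theorem theorem6:
  shows "CACE_identifiable model_1ZD \<and> CACE_identifiable model_1UD
    \<and> CACE_identifiable model_1UY \<and> CACE_identifiable model_1DY
    \<and> CACE_identifiable model_1ZY"
  using CACE_identifiable_1ZD CACE_identifiable_1UD CACE_identifiable_1UY CACE_identifiable_1DY
    CACE_identifiable_1ZY by blast

end
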